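(* Let $n\ge2$, $k\ge1$. The John ellipsoid (maximum-volume ellipsoid contained in) of $\overline C$, viewed as a convex body in the affine hyperplane $M$ with the Euclidean structure induced by $\langle f,g\rangle=\int_{S^{n-1}}fg\,d\sigma$, is the ball $\{f\in M:\|f-r^{2k}\|\le \rho\}$ with center $r^{2k}=(x_1^2+\dots+x_n^2)^k$ and radius \[ \rho=\frac{1}{\sqrt{\binom{n+2k-1}{2k}-1}} . \]
   Context: $P_{n,2k}$ is the space of real forms of degree $2k$ in $n$ variables; $\sigma$ is the rotation-invariant probability measure on $S^{n-1}$; $\|f\|=\langle f,f\rangle^{1/2}$. $M=\{f\in P_{n,2k}:\int_{S^{n-1}}f\,d\sigma=1\}$, $C$ is the cone of forms in $P_{n,2k}$ nonnegative on $\mathbb R^n$, and $\overline C=C\cap M$. *)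

theory Defs
  imports "HOL-Analysis.Analysis"
begin

definition mono_exps :: "nat \<Rightarrow> ('n::finite \<Rightarrow> nat) set" where
  "mono_exps d = {\<alpha>. (\<Sum>i\<in>UNIV. \<alpha> i) = d}"

text \<open>P_{n,d}: real forms of degree d in n = CARD('n) variables, as functions on R^n.\<close>
definition forms :: "nat \<Rightarrow> (real^'n::finite \<Rightarrow> real) set" where
  "forms d = {f. \<exists>c::('n \<Rightarrow> nat) \<Rightarrow> real.
      f = (\<lambda>x. \<Sum>\<alpha>\<in>mono_exps d. c \<alpha> * (\<Prod>i\<in>UNIV. (x $ i) ^ (\<alpha> i)))}"

text \<open>The rotation-invariant probability measure on the unit sphere S^{n-1}, obtained as the
  push-forward of the uniform distribution on the unit ball under radial projection.\<close>
definition sigma :: "(real^'n::finite) measure" where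
  "sigma = distr (uniform_measure lborel (ball 0 1)) borel (\<lambda>x. x /\<^sub>R norm x)"

definition sint :: "(real^'n::finite \<Rightarrow> real) \<Rightarrow> real" where
  "sint f = integral\<^sup>L sigma f"

definition ip :: "(real^'n::finite \<Rightarrow> real) \<Rightarrow> (real^'n \<Rightarrow> real) \<Rightarrow> real" where
  "ip f g = sint (\<lambda>x. f x * g x)"

definition fnorm :: "(real^'n::finite \<Rightarrow> real) \<Rightarrow> real" where
  "fnorm f = sqrt (ip f f)"

definition Mset :: "nat \<Rightarrow> (real^'n::finite \<Rightarrow> real) set" where
  "Mset k = {f \<in> forms (2*k). sint f = 1}"

definition Ccone :: "nat \<Rightarrow> (real^'n::finite \<Rightarrow> real) set" where
  "Ccone k = {f \<in> forms (2*k). \<forall>x. 0 \<le> f x}"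

definition Cbar :: "nat \<Rightarrow> (real^'n::finite \<Rightarrow> real) set" where
  "Cbar k = Ccone k \<inter> Mset k"

definition r2k :: "nat \<Rightarrow> real^'n::finite \<Rightarrow> real" where
  "r2k k = (\<lambda>x. (\<Sum>i\<in>UNIV. (x $ i)^2) ^ k)"

definition rho :: "nat \<Rightarrow> nat \<Rightarrow> real" where
  "rho n k = 1 / sqrt (real ((n + 2*k - 1) choose (2*k)) - 1)"

definition onb_M0 :: "nat \<Rightarrow> nat \<Rightarrow> (nat \<Rightarrow> real^'n::finite \<Rightarrow> real) \<Rightarrow> bool" where
  "onb_M0 k m g \<longleftrightarrow>
     (\<forall>i<m. g i \<in> forms (2*k) \<and> sint (g i) = 0) \<and>
     (\<forall>i<m. \<forall>j<m. ip (g i) (g j) = (if i = j then 1 else 0)) \<and>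
     (\<forall>f \<in> forms (2*k). sint f = 0 \<longrightarrow> (\<exists>t. f = (\<lambda>x. \<Sum>i<m. t i * g i x)))"

text \<open>Ellipsoid in M with center c, orthonormal principal axes g_i and semi-axis lengths a_i > 0;
  its (m-dimensional) volume is proportional to the product of the a_i.\<close>
definition ellipsoid :: "(real^'n::finite \<Rightarrow> real) \<Rightarrow> (nat \<Rightarrow> real^'n \<Rightarrow> real) \<Rightarrow> (nat \<Rightarrow> real)
    \<Rightarrow> nat \<Rightarrow> (real^'n \<Rightarrow> real) set" where
  "ellipsoid c g a m = {(\<lambda>x. c x + (\<Sum>i<m. t i * g i x)) | t. (\<Sum>i<m. (t i / a i)^2) \<le> 1}"

end

theory Submission
  imports Defs "HOL-Probability.Probability_Measure" "HOL-Library.Function_Algebras"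
    "HOL-Library.Multiset" "HOL-Computational_Algebra.Polynomial"
begin

text \<open>The map \<open>f \<mapsto> f - r\<^sup>2\<^sup>k\<close> identifies \<open>M\<close> with the hyperplane
  \<open>M\<^sub>0 = {f. \<integral> f d\<sigma> = 0}\<close>, the orthogonal complement of \<open>r\<^sup>2\<^sup>k\<close> in \<open>P\<^sub>n\<^sub>,\<^sub>2\<^sub>k\<close>.
  Let \<open>g\<^sub>1, \<dots>, g\<^sub>m\<close> be an orthonormal basis of \<open>M\<^sub>0\<close>, so \<open>m + 1 = dim P\<^sub>n\<^sub>,\<^sub>2\<^sub>k\<close>.
  Rotation invariance of \<open>\<sigma>\<close> forces \<open>\<Sum>\<^sub>i g\<^sub>i(x)\<^sup>2\<close> to be constant on the sphere,
  hence equal to \<open>m\<close>; by Cauchy--Schwarz \<open>|f(x) - 1| \<le> \<surd>m \<parallel>f - r\<^sup>2\<^sup>k\<parallel>\<close> there, so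
  the ball of radius \<open>1/\<surd>m\<close> about \<open>r\<^sup>2\<^sup>k\<close> consists of nonnegative forms.
  Conversely, if the ellipsoid \<open>c + \<Sum>\<^sub>i t\<^sub>i g\<^sub>i\<close>, \<open>\<Sum>\<^sub>i (t\<^sub>i/a\<^sub>i)\<^sup>2 \<le> 1\<close>, lies in \<open>C\<close>,
  minimising over \<open>t\<close> gives \<open>(\<Sum>\<^sub>i a\<^sub>i\<^sup>2 g\<^sub>i(x)\<^sup>2)\<^sup>1\<^sup>/\<^sup>2 \<le> c(x)\<close> on the sphere;
  Cauchy--Schwarz and integration over the sphere give \<open>\<Sum>\<^sub>i a\<^sub>i \<le> \<surd>m\<close>, and AM--GM gives
  \<open>\<Prod>\<^sub>i a\<^sub>i \<le> m\<^sup>-\<^sup>m\<^sup>/\<^sup>2\<close>. In the case of equality all \<open>a\<^sub>i = 1/\<surd>m\<close>, and the integrated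
  inequality is an equality, which forces \<open>c = r\<^sup>2\<^sup>k\<close>.\<close>

section \<open>Integration over the sphere\<close>

abbreviation unit_ball_measure :: "'a::euclidean_space measure" where
  "unit_ball_measure \<equiv> uniform_measure lborel (ball 0 1)"

lemma emeasure_lborel_ball_neq_0:
  "0 < r \<Longrightarrow> emeasure lborel (ball (c::'a::euclidean_space) r) \<noteq> 0"
  using emeasure_lborel_ball_finite[of c r] content_ball_pos[of r c]
  by (simp add: emeasure_eq_ennreal_measure)

interpretation unit_ball: prob_space "unit_ball_measure :: 'a::euclidean_space measure"
  using emeasure_lborel_ball_neq_0[of 1 0] emeasure_lborel_ball_finite[of 0 1]
  by (intro prob_space_uniform_measure) (auto simp: less_top)

lemma sigma_eq_distr_sgn: "(sigma :: (real^'n::finite) measure) = distr unit_ball_measure borel sgn"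
proof -
  have "(\<lambda>x::real^'n. x /\<^sub>R norm x) = sgn"
    by (simp add: fun_eq_iff sgn_div_norm)
  then show ?thesis
    unfolding sigma_def by simp
qed

lemma AE_unit_ball_nonzero: "AE x in (unit_ball_measure :: 'a::euclidean_space measure). x \<noteq> 0"
  by (rule AE_uniform_measureI) (use AE_lborel_singleton[of 0] in \<open>auto elim: eventually_mono\<close>)

lemma AE_unit_ball_sphere:
  assumes "\<And>x::'a::euclidean_space. norm x = 1 \<Longrightarrow> P x"
  shows "AE x in unit_ball_measure. P (sgn x)"
  using AE_unit_ball_nonzero by eventually_elim (simp add: assms norm_sgn)

lemma
  fixes f :: "real^'n::finite \<Rightarrow> real"
  assumes "continuous_on UNIV f"
  shows integrable_unit_ball_sgn: "integrable unit_ball_measure (\<lambda>x. f (sgn x))"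
    and integrable_sigma: "integrable sigma f"
    and sint_eq_unit_ball: "sint f = (\<integral>x. f (sgn x) \<partial>unit_ball_measure)"
proof -
  have [measurable]: "f \<in> borel_measurable borel"
    using assms by (rule borel_measurable_continuous_onI)
  obtain B where B: "\<And>y. y \<in> f ` cball 0 1 \<Longrightarrow> norm y \<le> B"
    using compact_continuous_image[OF continuous_on_subset[OF assms]] compact_imp_bounded
      bounded_iff by (metis compact_cball subset_UNIV)
  have "norm (sgn x) \<le> 1" for x :: "real^'n"
    by (simp add: norm_sgn)
  then show int: "integrable unit_ball_measure (\<lambda>x. f (sgn x))"
    by (intro unit_ball.integrable_const_bound[where B=B] AE_I2 B) auto
  then show "integrable sigma f"
    unfolding sigma_eq_distr_sgn by (subst integrable_distr_eq) auto
  show "sint f = (\<integral>x. f (sgn x) \<partial>unit_ball_measure)"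
    unfolding sint_def sigma_eq_distr_sgn by (subst integral_distr) auto
qed

lemma sint_cong_sphere:
  fixes f g :: "real^'n::finite \<Rightarrow> real"
  assumes "continuous_on UNIV f" "continuous_on UNIV g" "\<And>x. norm x = 1 \<Longrightarrow> f x = g x"
  shows "sint f = sint g"
proof -
  have [measurable]: "f \<in> borel_measurable borel" "g \<in> borel_measurable borel"
    using assms(1,2) by (simp_all add: borel_measurable_continuous_onI)
  have "(\<integral>x. f (sgn x) \<partial>unit_ball_measure) = (\<integral>x. g (sgn x) \<partial>unit_ball_measure)"
    by (intro integral_cong_AE AE_unit_ball_sphere assms(3)) auto
  then show ?thesis
    by (simp add: sint_eq_unit_ball assms)
qed

lemma sint_mono_sphere:
  fixes f g :: "real^'n::finite \<Rightarrow> real"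
  assumes "continuous_on UNIV f" "continuous_on UNIV g" "\<And>x. norm x = 1 \<Longrightarrow> f x \<le> g x"
  shows "sint f \<le> sint g"
proof -
  have "(\<integral>x. f (sgn x) \<partial>unit_ball_measure) \<le> (\<integral>x. g (sgn x) \<partial>unit_ball_measure)"
    using assms by (intro integral_mono_AE AE_unit_ball_sphere integrable_unit_ball_sgn) auto
  then show ?thesis
    by (simp add: sint_eq_unit_ball assms)
qed

lemma continuous_AE_lborel_eq_0:
  fixes h :: "'a::euclidean_space \<Rightarrow> real"
  assumes S: "open S" "y \<in> S" and h: "isCont h y" and zero: "AE x in lborel. x \<in> S \<longrightarrow> h x = 0"
  shows "h y = 0"
proof (rule ccontr)
  assume "h y \<noteq> 0"
  then obtain e where e: "0 < e" "\<And>z. dist y z < e \<Longrightarrow> h z \<noteq> 0"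
    using continuous_at_avoid[OF h] by blast
  obtain d where d: "0 < d" "ball y d \<subseteq> S"
    using S open_contains_ball by blast
  have "AE x in lborel. x \<notin> ball y (min d e)"
    using zero by eventually_elim (use e d in auto)
  then have "ball y (min d e) \<in> null_sets lborel"
    by (subst (asm) AE_iff_measurable[where N="ball y (min d e)"]) auto
  then show False
    using emeasure_lborel_ball_neq_0[of "min d e" y] d e by auto
qed

text \<open>\<open>f \<circ> sgn\<close> vanishes almost everywhere on the unit ball and is continuous at \<open>x\<^sub>0/2\<close>.\<close>
lemma sint_nonneg_eq_0_sphere:
  fixes f :: "real^'n::finite \<Rightarrow> real"
  assumes cf: "continuous_on UNIV f" and nonneg: "\<And>x. norm x = 1 \<Longrightarrow> 0 \<le> f x"
    and zero: "sint f = 0" and x0: "norm x0 = 1"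
  shows "f x0 = 0"
proof -
  have [measurable]: "f \<in> borel_measurable borel"
    using cf by (rule borel_measurable_continuous_onI)
  have "integrable unit_ball_measure (\<lambda>x. f (sgn x))"
    using cf by (rule integrable_unit_ball_sgn)
  moreover have "AE x in unit_ball_measure. 0 \<le> f (sgn x)"
    by (rule AE_unit_ball_sphere[OF nonneg])
  ultimately have "AE x in unit_ball_measure. f (sgn x) = 0"
    using zero by (simp add: sint_eq_unit_ball[OF cf] integral_nonneg_eq_0_iff_AE)
  then have null: "AE x in lborel. x \<in> ball 0 1 \<longrightarrow> f (sgn x) = 0"
    using emeasure_lborel_ball_neq_0[of 1 0] emeasure_lborel_ball_finite[of 0 1]
    by (subst (asm) AE_uniform_measure) auto
  define y0 where "y0 = (1/2::real) *\<^sub>R x0"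
  have y0: "sgn y0 = x0" "y0 \<noteq> 0" "y0 \<in> ball 0 1"
    using x0 by (auto simp: y0_def sgn_div_norm)
  have "isCont (\<lambda>x. f (sgn x)) y0"
    using y0(2) cf by (intro isCont_o2[OF isCont_sgn]) (auto simp: continuous_on_eq_continuous_at)
  then have "f (sgn y0) = 0"
    using null y0(3) by (intro continuous_AE_lborel_eq_0[of "ball 0 1"]) auto
  then show ?thesis
    using y0(1) by simp
qed

section \<open>Rotation invariance\<close>

lemma continuous_on_orthogonal_transformation:
  fixes T :: "'a::euclidean_space \<Rightarrow> 'a"
  shows "orthogonal_transformation T \<Longrightarrow> continuous_on UNIV T"
  by (intro linear_continuous_on
      orthogonal_transformation_linear[THEN linear_conv_bounded_linear[THEN iffD1]])

lemma emeasure_lborel_ball_eq: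
  fixes a b :: "'a::euclidean_space"
  shows "emeasure lborel (ball a r) = emeasure lborel (ball b r)"
  by (cases "r \<le> 0") (simp_all add: emeasure_ball ball_empty)

lemma open_disjoint_balls_ae:
  fixes G :: "'a::euclidean_space set"
  assumes "open G"
  obtains C where "countable C" "\<And>i. i \<in> C \<Longrightarrow> ball (fst i) (snd i) \<subseteq> G"
    "disjoint_family_on (\<lambda>i. ball (fst i) (snd i)) C"
    "negligible (G - (\<Union>i\<in>C. ball (fst i) (snd i)))"
proof -
  define K where "K = {(c, r::real). 0 < r \<and> ball c r \<subseteq> G}"
  have "\<exists>i. i \<in> K \<and> x \<in> ball (fst i) (snd i) \<and> snd i < d" if "x \<in> G" "0 < d" for x d
  proof -
    obtain e where "e > 0" "ball x e \<subseteq> G"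
      using assms \<open>x \<in> G\<close> open_contains_ball by blast
    then show ?thesis
      by (intro exI[of _ "(x, min e (d/2))"]) (use that in \<open>auto simp: K_def\<close>)
  qed
  then obtain C where "countable C" "C \<subseteq> K"
    "pairwise (\<lambda>i j. disjnt (ball (fst i) (snd i)) (ball (fst j) (snd j))) C"
    "negligible (G - (\<Union>i\<in>C. ball (fst i) (snd i)))"
    by (rule Vitali_covering_theorem_balls)
  then show ?thesis
    by (intro that) (force simp: K_def disjoint_family_on_def pairwise_def disjnt_def)+
qed

lemma emeasure_open_negligible_diff:
  fixes G V :: "'a::euclidean_space set"
  assumes "open G" "open V" "V \<subseteq> G" "negligible (G - V)"
  shows "emeasure lborel G = emeasure lborel V"
proof -
  have "G - V \<in> null_sets lborel"
    using assms by (simp add: negligible_iff_null_sets null_sets_completion_iff borel_open)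
  then have "emeasure lborel (V \<union> (G - V)) = emeasure lborel V"
    using assms(2) by (intro emeasure_Un_null_set) auto
  then show ?thesis
    using assms(3) by (simp add: Un_absorb1)
qed

text \<open>An open set is, up to a null set, a countable disjoint union of balls, and an orthogonal
  map carries balls to balls of the same radius.\<close>
lemma emeasure_orthogonal_image_open:
  fixes T :: "'a::euclidean_space \<Rightarrow> 'a"
  assumes T: "orthogonal_transformation T" and G: "open G"
  shows "emeasure lborel (T ` G) = emeasure lborel G"
proof -
  obtain C where C: "countable C" "\<And>i. i \<in> C \<Longrightarrow> ball (fst i) (snd i) \<subseteq> G"
    "disjoint_family_on (\<lambda>i. ball (fst i) (snd i)) C"
    and null: "negligible (G - (\<Union>i\<in>C. ball (fst i) (snd i)))"
    using open_disjoint_balls_ae[OF G] by blast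
  define V where "V = (\<Union>i\<in>C. ball (fst i) (snd i))"
  have inj: "inj T"
    using T by (rule orthogonal_transformation_inj)
  have lin: "linear T"
    using T by (rule orthogonal_transformation_linear)
  have open_image: "open (T ` S)" if "open S" for S
    using that lin orthogonal_transformation_surj[OF T] by (rule open_surjective_linear_image)
  have TV: "T ` V = (\<Union>i\<in>C. ball (T (fst i)) (snd i))"
    unfolding V_def image_UN using image_orthogonal_transformation_ball[OF T] by simp
  have "disjoint_family_on (\<lambda>i. T ` ball (fst i) (snd i)) C"
    using C(3) inj by (auto simp: disjoint_family_on_def simp flip: image_Int)
  then have disj: "disjoint_family_on (\<lambda>i. ball (T (fst i)) (snd i)) C"
    by (simp add: image_orthogonal_transformation_ball[OF T])
  have "emeasure lborel (T ` V) = (\<integral>\<^sup>+i. emeasure lborel (ball (T (fst i)) (snd i)) \<partial>count_space C)"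
    unfolding TV using C(1) disj by (intro emeasure_UN_countable) auto
  also have "\<dots> = (\<integral>\<^sup>+i. emeasure lborel (ball (fst i) (snd i)) \<partial>count_space C)"
    by (intro nn_integral_cong emeasure_lborel_ball_eq)
  also have "\<dots> = emeasure lborel V"
    unfolding V_def using C(1,3) by (intro emeasure_UN_countable[symmetric]) auto
  finally have "emeasure lborel (T ` V) = emeasure lborel V" .
  moreover have "emeasure lborel G = emeasure lborel V"
    using G C(2) null by (intro emeasure_open_negligible_diff) (auto simp: V_def)
  moreover have "emeasure lborel (T ` G) = emeasure lborel (T ` V)"
  proof (rule emeasure_open_negligible_diff)
    have "negligible (T ` (G - V))"
      using null lin by (intro negligible_differentiable_image_negligible[OF order_refl])
        (auto simp: V_def linear_imp_differentiable_on)
    then show "negligible (T ` G - T ` V)"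
      by (simp add: image_set_diff[OF inj])
  qed (use G C(2) in \<open>auto simp: V_def intro!: open_image\<close>)
  ultimately show ?thesis
    by simp
qed

lemma lborel_distr_orthogonal:
  fixes T :: "'a::euclidean_space \<Rightarrow> 'a"
  assumes T: "orthogonal_transformation T"
  shows "distr lborel borel T = lborel"
proof (rule lborel_eqI[symmetric])
  have [measurable]: "T \<in> borel_measurable borel"
    using T by (intro borel_measurable_continuous_onI continuous_on_orthogonal_transformation)
  have Ti: "orthogonal_transformation (inv T)"
    using T by (rule orthogonal_transformation_inv)
  fix l u :: 'a assume "\<And>b. b \<in> Basis \<Longrightarrow> l \<bullet> b \<le> u \<bullet> b"
  moreover have "T -` box l u = inv T ` box l u"
    using orthogonal_transformation_bij[OF T] by (simp add: bij_vimage_eq_inv_image)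
  ultimately show "emeasure (distr lborel borel T) (box l u) = (\<Prod>b\<in>Basis. (u - l) \<bullet> b)"
    by (simp add: emeasure_distr emeasure_orthogonal_image_open[OF Ti] open_box)
qed simp

lemma unit_ball_distr_orthogonal:
  fixes T :: "'a::euclidean_space \<Rightarrow> 'a"
  assumes T: "orthogonal_transformation T"
  shows "distr unit_ball_measure borel T = unit_ball_measure"
proof (rule measure_eqI)
  have [measurable]: "T \<in> borel_measurable borel"
    using T by (intro borel_measurable_continuous_onI continuous_on_orthogonal_transformation)
  fix A :: "'a set" assume "A \<in> sets (distr unit_ball_measure borel T)"
  then have [measurable]: "A \<in> sets borel" "T -` A \<in> sets borel"
    using measurable_sets_borel[of T borel A] by simp_all
  have "ball 0 1 \<inter> T -` A = T -` (ball 0 1 \<inter> A)"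
    using orthogonal_transformation_norm[OF T] by auto
  then have "emeasure lborel (ball 0 1 \<inter> T -` A) = emeasure (distr lborel borel T) (ball 0 1 \<inter> A)"
    by (simp add: emeasure_distr)
  then show "emeasure (distr unit_ball_measure borel T) A = emeasure unit_ball_measure A"
    by (simp add: emeasure_distr lborel_distr_orthogonal[OF T])
qed simp

lemma sint_orthogonal:
  fixes f :: "real^'n::finite \<Rightarrow> real" and T :: "real^'n \<Rightarrow> real^'n"
  assumes T: "orthogonal_transformation T" and cf: "continuous_on UNIV f"
  shows "sint (\<lambda>x. f (T x)) = sint f"
proof -
  have cT: "continuous_on UNIV T"
    using T by (rule continuous_on_orthogonal_transformation)
  have [measurable]: "T \<in> borel_measurable borel" "f \<in> borel_measurable borel"
    using cT cf by (simp_all add: borel_measurable_continuous_onI)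
  have sgn_T: "T (sgn x) = sgn (T x)" for x
    by (simp add: sgn_div_norm orthogonal_transformation_scaleR[OF T]
        orthogonal_transformation_norm[OF T])
  have "sint (\<lambda>x. f (T x)) = (\<integral>x. f (sgn (T x)) \<partial>unit_ball_measure)"
    by (simp add: sint_eq_unit_ball continuous_on_compose2[OF cf cT] sgn_T)
  also have "\<dots> = (\<integral>x. f (sgn x) \<partial>distr unit_ball_measure borel T)"
    by (simp add: integral_distr)
  also have "\<dots> = sint f"
    by (simp add: unit_ball_distr_orthogonal[OF T] sint_eq_unit_ball[OF cf])
  finally show ?thesis .
qed

section \<open>Forms\<close>

definition monomial :: "('n::finite \<Rightarrow> nat) \<Rightarrow> real^'n \<Rightarrow> real" where
  "monomial \<alpha> x = (\<Prod>i\<in>UNIV. (x $ i) ^ \<alpha> i)"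

lemma mono_exps_le: "\<alpha> \<in> mono_exps d \<Longrightarrow> \<alpha> i \<le> d"
  using member_le_sum[of i UNIV \<alpha>] by (simp add: mono_exps_def)

lemma finite_mono_exps: "finite (mono_exps d :: ('n::finite \<Rightarrow> nat) set)"
proof (rule finite_subset)
  show "mono_exps d \<subseteq> PiE UNIV (\<lambda>_::'n. {..d})"
    by (auto simp: PiE_def extensional_def mono_exps_le)
qed (simp add: finite_PiE)

lemma forms_iff: "f \<in> forms d \<longleftrightarrow> (\<exists>c. f = (\<lambda>x. \<Sum>\<alpha>\<in>mono_exps d. c \<alpha> * monomial \<alpha> x))"
  by (simp add: forms_def monomial_def)

lemma forms_add: "f \<in> forms d \<Longrightarrow> g \<in> forms d \<Longrightarrow> (\<lambda>x. f x + g x) \<in> forms d"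
  unfolding forms_iff
proof (elim exE)
  fix c e assume "f = (\<lambda>x. \<Sum>\<alpha>\<in>mono_exps d. c \<alpha> * monomial \<alpha> x)"
    "g = (\<lambda>x. \<Sum>\<alpha>\<in>mono_exps d. e \<alpha> * monomial \<alpha> x)"
  then show "\<exists>c. (\<lambda>x. f x + g x) = (\<lambda>x. \<Sum>\<alpha>\<in>mono_exps d. c \<alpha> * monomial \<alpha> x)"
    by (intro exI[of _ "\<lambda>\<alpha>. c \<alpha> + e \<alpha>"]) (simp add: sum.distrib algebra_simps)
qed

lemma forms_cmult: "f \<in> forms d \<Longrightarrow> (\<lambda>x. a * f x) \<in> forms d"
  unfolding forms_iff
proof (elim exE)
  fix c assume "f = (\<lambda>x. \<Sum>\<alpha>\<in>mono_exps d. c \<alpha> * monomial \<alpha> x)"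
  then show "\<exists>c. (\<lambda>x. a * f x) = (\<lambda>x. \<Sum>\<alpha>\<in>mono_exps d. c \<alpha> * monomial \<alpha> x)"
    by (intro exI[of _ "\<lambda>\<alpha>. a * c \<alpha>"]) (simp add: sum_distrib_left mult.assoc)
qed

lemma forms_diff: "f \<in> forms d \<Longrightarrow> g \<in> forms d \<Longrightarrow> (\<lambda>x. f x - g x) \<in> forms d"
  using forms_add[of f d "\<lambda>x. (-1) * g x"] forms_cmult[of g d "-1"] by simp

lemma forms_zero: "(\<lambda>x. 0) \<in> forms d"
  unfolding forms_iff by (rule exI[of _ "\<lambda>_. 0"]) simp

lemma forms_sum:
  assumes "finite A" "\<And>a. a \<in> A \<Longrightarrow> f a \<in> forms d"
  shows "(\<lambda>x. \<Sum>a\<in>A. f a x) \<in> forms d"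
  using assms by (induction A rule: finite_induct) (auto intro: forms_zero forms_add)

lemma forms_lincomb:
  assumes "finite A" "\<And>a. a \<in> A \<Longrightarrow> f a \<in> forms d"
  shows "(\<lambda>x. \<Sum>a\<in>A. t a * f a x) \<in> forms d"
  using assms by (intro forms_sum forms_cmult)

lemma monomial_forms:
  assumes "\<alpha> \<in> mono_exps d"
  shows "monomial \<alpha> \<in> forms d"
proof -
  have "(\<Sum>\<beta>\<in>mono_exps d. (if \<beta> = \<alpha> then 1 else 0) * monomial \<beta> x) = monomial \<alpha> x" for x
    using assms by (simp add: if_distrib[of "\<lambda>c. c * _"] sum.delta[OF finite_mono_exps] cong: if_cong)
  then show ?thesis
    unfolding forms_iff by (intro exI[of _ "\<lambda>\<beta>. if \<beta> = \<alpha> then 1 else 0"]) simp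
qed

lemma monomial_mult: "monomial \<alpha> x * monomial \<beta> x = monomial (\<lambda>i. \<alpha> i + \<beta> i) x"
  by (simp add: monomial_def power_add prod.distrib)

lemma forms_mult:
  assumes "f \<in> forms a" "g \<in> forms b"
  shows "(\<lambda>x. f x * g x) \<in> forms (a + b)"
proof -
  obtain c e where
    f: "f = (\<lambda>x. \<Sum>\<alpha>\<in>mono_exps a. c \<alpha> * monomial \<alpha> x)" and
    g: "g = (\<lambda>x. \<Sum>\<beta>\<in>mono_exps b. e \<beta> * monomial \<beta> x)"
    using assms by (auto simp: forms_iff)
  have "(\<lambda>i. \<alpha> i + \<beta> i) \<in> mono_exps (a + b)" if "\<alpha> \<in> mono_exps a" "\<beta> \<in> mono_exps b" for \<alpha> \<beta>
    using that by (simp add: mono_exps_def sum.distrib)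
  then have "(\<lambda>x. \<Sum>\<alpha>\<in>mono_exps a. \<Sum>\<beta>\<in>mono_exps b.
      (c \<alpha> * e \<beta>) * monomial (\<lambda>i. \<alpha> i + \<beta> i) x) \<in> forms (a + b)"
    by (intro forms_sum finite_mono_exps forms_lincomb monomial_forms)
  then show ?thesis
    by (simp add: f g sum_product monomial_mult[symmetric] algebra_simps)
qed

lemma forms_prod:
  fixes f :: "'b \<Rightarrow> real^'n::finite \<Rightarrow> real"
  assumes "finite A" "\<And>a. a \<in> A \<Longrightarrow> f a \<in> forms (deg a)"
  shows "(\<lambda>x. \<Prod>a\<in>A. f a x) \<in> forms (\<Sum>a\<in>A. deg a)"
  using assms
proof (induction A rule: finite_induct)
  case empty
  have "monomial (\<lambda>_::'n. 0) \<in> forms 0"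
    by (rule monomial_forms) (simp add: mono_exps_def)
  moreover have "monomial (\<lambda>_::'n. 0) = (\<lambda>x. 1)"
    by (simp add: monomial_def fun_eq_iff)
  ultimately have "(\<lambda>x::real^'n. 1) \<in> forms 0"
    by metis
  then show ?case
    by simp
next
  case (insert a A)
  then show ?case
    using forms_mult[of "f a" "deg a" "\<lambda>x. \<Prod>a\<in>A. f a x"] by simp
qed

lemma forms_power: "f \<in> forms a \<Longrightarrow> (\<lambda>x. f x ^ m) \<in> forms (a * m)"
  using forms_prod[of "{..<m}" "\<lambda>_. f" "\<lambda>_. a"] by (simp add: mult.commute)

lemma forms_component: "(\<lambda>x. x $ j) \<in> forms 1"
proof -
  have "monomial (\<lambda>i. if i = j then 1 else 0) \<in> forms 1"
    by (rule monomial_forms) (simp add: mono_exps_def)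
  moreover have "monomial (\<lambda>i. if i = j then 1 else 0) = (\<lambda>x. x $ j)"
    by (simp add: monomial_def fun_eq_iff if_distrib cong: if_cong)
  ultimately show ?thesis
    by simp
qed

lemma forms_linear_comp:
  assumes T: "linear T" and f: "f \<in> forms d"
  shows "(\<lambda>x. f (T x)) \<in> forms d"
proof -
  obtain c where f_eq: "f = (\<lambda>x. \<Sum>\<alpha>\<in>mono_exps d. c \<alpha> * monomial \<alpha> x)"
    using f by (auto simp: forms_iff)
  have T_i: "(\<lambda>x. T x $ i) \<in> forms 1" for i
  proof -
    have "T x $ i = (\<Sum>j\<in>UNIV. matrix T $ i $ j * x $ j)" for x
    proof -
      have "T x = matrix T *v x"
        using matrix_vector_mul(2)[OF T] by metis
      then show ?thesis
        by (simp add: matrix_vector_mult_def)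
    qed
    moreover have "(\<lambda>x. \<Sum>j\<in>UNIV. matrix T $ i $ j * x $ j) \<in> forms 1"
      by (intro forms_lincomb forms_component) simp
    ultimately show ?thesis
      by simp
  qed
  have "(\<lambda>x. \<Prod>i\<in>UNIV. (T x $ i) ^ \<alpha> i) \<in> forms (\<Sum>i\<in>UNIV. 1 * \<alpha> i)" for \<alpha>
    by (intro forms_prod forms_power T_i) simp
  then have comp_forms: "(\<lambda>x. monomial \<alpha> (T x)) \<in> forms (sum \<alpha> UNIV)" for \<alpha>
    by (simp add: monomial_def)
  have "(\<lambda>x. monomial \<alpha> (T x)) \<in> forms d" if "\<alpha> \<in> mono_exps d" for \<alpha>
    using that comp_forms[of \<alpha>] by (simp add: mono_exps_def)
  then show ?thesis
    unfolding f_eq by (intro forms_lincomb finite_mono_exps)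
qed

lemma forms_continuous: "f \<in> forms d \<Longrightarrow> continuous_on UNIV f"
  unfolding forms_iff monomial_def by (auto intro!: continuous_intros)

lemma monomial_homogeneous: "\<alpha> \<in> mono_exps d \<Longrightarrow> monomial \<alpha> (a *\<^sub>R x) = a ^ d * monomial \<alpha> x"
  by (simp add: monomial_def mono_exps_def power_mult_distrib prod.distrib power_sum[symmetric])

lemma forms_homogeneous: "f \<in> forms d \<Longrightarrow> f (a *\<^sub>R x) = a ^ d * f x"
  unfolding forms_iff
  by (auto simp: monomial_homogeneous sum_distrib_left algebra_simps intro!: sum.cong)

lemma forms_sphere_value:
  fixes f :: "real^'n::finite \<Rightarrow> real"
  assumes f: "f \<in> forms d"
  obtains y where "norm y = 1" "f x = norm x ^ d * f y"
proof (cases "x = 0")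
  case True
  then show ?thesis
    using forms_homogeneous[OF f, of 0 "axis undefined 1"] by (intro that[of "axis undefined 1"]) simp_all
next
  case False
  then show ?thesis
    using forms_homogeneous[OF f, of "norm x" "sgn x"]
    by (intro that[of "sgn x"]) (simp_all add: norm_sgn sgn_div_norm)
qed

lemma forms_eq_0_sphere:
  fixes f :: "real^'n::finite \<Rightarrow> real"
  assumes f: "f \<in> forms d" and zero: "\<And>x. norm x = 1 \<Longrightarrow> f x = 0"
  shows "f = (\<lambda>x. 0)"
proof
  fix x
  obtain y where "norm y = 1" "f x = norm x ^ d * f y"
    using forms_sphere_value[OF f] .
  then show "f x = 0"
    by (simp add: zero)
qed

lemma forms_nonneg_sphere:
  fixes f :: "real^'n::finite \<Rightarrow> real"
  assumes f: "f \<in> forms d" and nonneg: "\<And>x. norm x = 1 \<Longrightarrow> 0 \<le> f x"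
  shows "0 \<le> f x"
proof -
  obtain y where "norm y = 1" "f x = norm x ^ d * f y"
    using forms_sphere_value[OF f] .
  then show ?thesis
    by (simp add: nonneg)
qed

lemma forms_eq_sphere:
  fixes f g :: "real^'n::finite \<Rightarrow> real"
  assumes "f \<in> forms d" "g \<in> forms d" "\<And>x. norm x = 1 \<Longrightarrow> f x = g x"
  shows "f = g"
  using forms_eq_0_sphere[OF forms_diff[OF assms(1,2)]] assms(3) by (simp add: fun_eq_iff)

lemma r2k_forms: "r2k k \<in> forms (2 * k)"
proof -
  have "(\<lambda>x::real^'n. \<Sum>i\<in>UNIV. (x $ i) ^ 2) \<in> forms (1 * 2)"
    by (intro forms_sum forms_power forms_component) simp
  then have "(\<lambda>x::real^'n. (\<Sum>i\<in>UNIV. (x $ i) ^ 2) ^ k) \<in> forms (1 * 2 * k)"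
    by (rule forms_power)
  then show ?thesis
    by (simp add: r2k_def)
qed

lemma r2k_sphere: "norm x = 1 \<Longrightarrow> r2k k x = 1"
proof -
  have "(\<Sum>i\<in>UNIV. (x $ i) ^ 2) = norm x ^ 2"
    by (simp add: norm_vec_def L2_set_def sum_nonneg)
  then show "norm x = 1 \<Longrightarrow> r2k k x = 1"
    by (simp add: r2k_def)
qed

section \<open>Orthonormal families of forms\<close>

lemma sint_add:
  fixes f g :: "real^'n::finite \<Rightarrow> real"
  assumes "continuous_on UNIV f" "continuous_on UNIV g"
  shows "sint (\<lambda>x. f x + g x) = sint f + sint g"
  unfolding sint_def using integrable_sigma[OF assms(1)] integrable_sigma[OF assms(2)] by simp

lemma sint_diff:
  fixes f g :: "real^'n::finite \<Rightarrow> real"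
  assumes "continuous_on UNIV f" "continuous_on UNIV g"
  shows "sint (\<lambda>x. f x - g x) = sint f - sint g"
  unfolding sint_def using integrable_sigma[OF assms(1)] integrable_sigma[OF assms(2)] by simp

lemma sint_cmult: "sint (\<lambda>x. c * f x) = c * sint f"
  by (simp add: sint_def)

lemma sint_sum:
  fixes F :: "'a \<Rightarrow> real^'n::finite \<Rightarrow> real"
  assumes "\<And>a. a \<in> A \<Longrightarrow> continuous_on UNIV (F a)"
  shows "sint (\<lambda>x. \<Sum>a\<in>A. F a x) = (\<Sum>a\<in>A. sint (F a))"
  unfolding sint_def using assms integrable_sigma by (intro Bochner_Integration.integral_sum) auto

lemma sint_lincomb:
  assumes "\<And>a. a \<in> A \<Longrightarrow> f a \<in> forms d"
  shows "sint (\<lambda>x. \<Sum>a\<in>A. t a * f a x) = (\<Sum>a\<in>A. t a * sint (f a))"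
proof -
  have "sint (\<lambda>x. \<Sum>a\<in>A. t a * f a x) = (\<Sum>a\<in>A. sint (\<lambda>x. t a * f a x))"
    using assms by (intro sint_sum continuous_on_mult_left forms_continuous)
  then show ?thesis
    by (simp add: sint_cmult)
qed

lemma sint_const: "sint (\<lambda>x::real^'n::finite. c) = c"
  using unit_ball.prob_space[where 'a="real^'n"] by (simp add: sint_eq_unit_ball)

lemma sint_r2k: "sint (r2k k :: real^'n::finite \<Rightarrow> real) = 1"
proof -
  have "sint (r2k k :: real^'n \<Rightarrow> real) = sint (\<lambda>x::real^'n. 1)"
    by (rule sint_cong_sphere) (simp_all add: forms_continuous[OF r2k_forms] r2k_sphere)
  then show ?thesis
    by (simp add: sint_const)
qed

lemma forms_mult_continuous:
  "f \<in> forms a \<Longrightarrow> g \<in> forms b \<Longrightarrow> continuous_on UNIV (\<lambda>x. f x * g x)"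
  by (intro continuous_intros forms_continuous)

lemma ip_sym: "ip f g = ip g f"
  by (simp add: ip_def mult.commute)

lemma ip_cmult_left: "ip (\<lambda>x. c * f x) g = c * ip f g"
  by (simp add: ip_def mult.assoc sint_cmult)

lemma ip_diff_left:
  assumes "f \<in> forms d" "h \<in> forms d" "g \<in> forms d'"
  shows "ip (\<lambda>x. f x - h x) g = ip f g - ip h g"
  unfolding ip_def using assms
  by (simp add: left_diff_distrib sint_diff forms_mult_continuous)

lemma ip_lincomb_left:
  assumes "\<And>a. a \<in> A \<Longrightarrow> f a \<in> forms d" "g \<in> forms d'"
  shows "ip (\<lambda>x. \<Sum>a\<in>A. t a * f a x) g = (\<Sum>a\<in>A. t a * ip (f a) g)"
proof -
  have "ip (\<lambda>x. \<Sum>a\<in>A. t a * f a x) g = sint (\<lambda>x. \<Sum>a\<in>A. t a * (f a x * g x))"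
    unfolding ip_def by (simp add: sum_distrib_right mult.assoc)
  also have "\<dots> = (\<Sum>a\<in>A. sint (\<lambda>x. t a * (f a x * g x)))"
    using assms by (intro sint_sum continuous_on_mult_left forms_mult_continuous)
  also have "\<dots> = (\<Sum>a\<in>A. t a * ip (f a) g)"
    by (simp add: sint_cmult ip_def)
  finally show ?thesis .
qed

lemma ip_nonneg: "f \<in> forms d \<Longrightarrow> 0 \<le> ip f f"
  unfolding ip_def using sint_mono_sphere[of "\<lambda>x. 0" "\<lambda>x. f x * f x"]
  by (simp add: sint_const forms_mult_continuous)

lemma ip_self_eq_0:
  fixes f :: "real^'n::finite \<Rightarrow> real"
  assumes f: "f \<in> forms d" and zero: "ip f f = 0"
  shows "f = (\<lambda>x. 0)"
proof (rule forms_eq_0_sphere[OF f])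
  fix x :: "real^'n" assume "norm x = 1"
  then have "f x * f x = 0"
    using sint_nonneg_eq_0_sphere[OF forms_mult_continuous[OF f f], of x] zero
    by (simp add: ip_def)
  then show "f x = 0"
    by simp
qed

lemma ip_r2k: "continuous_on UNIV f \<Longrightarrow> ip f (r2k k) = sint f"
  unfolding ip_def
  by (rule sint_cong_sphere)
     (simp_all add: continuous_on_mult forms_continuous[OF r2k_forms] r2k_sphere)

lemma ip_r2k_r2k: "ip (r2k k) (r2k k :: real^'n::finite \<Rightarrow> real) = 1"
  by (simp add: ip_r2k forms_continuous[OF r2k_forms] sint_r2k)

definition lincombs :: "nat \<Rightarrow> (nat \<Rightarrow> 'a \<Rightarrow> real) \<Rightarrow> ('a \<Rightarrow> real) set" where
  "lincombs N e = range (\<lambda>t x. \<Sum>i<N. t i * e i x)"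

definition orthonormal :: "nat \<Rightarrow> nat \<Rightarrow> (nat \<Rightarrow> real^'n::finite \<Rightarrow> real) \<Rightarrow> bool" where
  "orthonormal d N e \<longleftrightarrow> (\<forall>i<N. e i \<in> forms d) \<and>
     (\<forall>i<N. \<forall>j<N. ip (e i) (e j) = (if i = j then 1 else 0))"

definition orthonormal_basis :: "nat \<Rightarrow> nat \<Rightarrow> (nat \<Rightarrow> real^'n::finite \<Rightarrow> real) \<Rightarrow> bool" where
  "orthonormal_basis d N e \<longleftrightarrow> orthonormal d N e \<and> forms d \<subseteq> lincombs N e"

lemma lincombs_iff: "f \<in> lincombs N e \<longleftrightarrow> (\<exists>t. f = (\<lambda>x. \<Sum>i<N. t i * e i x))"
  by (auto simp: lincombs_def)

lemma lincombs_mono: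
  assumes "N \<le> N'" "\<And>i. i < N \<Longrightarrow> e' i = e i"
  shows "lincombs N e \<subseteq> lincombs N' e'"
proof
  fix f assume "f \<in> lincombs N e"
  then obtain t where f: "f = (\<lambda>x. \<Sum>i<N. t i * e i x)"
    by (auto simp: lincombs_iff)
  have "(\<Sum>i<N'. (if i < N then t i else 0) * e' i x) = (\<Sum>i<N. t i * e i x)" for x
  proof -
    have "(\<Sum>i<N'. (if i < N then t i else 0) * e' i x) = (\<Sum>i<N. (if i < N then t i else 0) * e' i x)"
      using assms(1) by (intro sum.mono_neutral_right) auto
    also have "\<dots> = (\<Sum>i<N. t i * e i x)"
      using assms(2) by simp
    finally show ?thesis .
  qed
  then show "f \<in> lincombs N' e'"
    unfolding lincombs_iff f by (intro exI[of _ "\<lambda>i. if i < N then t i else 0"]) simp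
qed

lemma lincombs_lincomb:
  assumes "finite A" "\<And>a. a \<in> A \<Longrightarrow> f a \<in> lincombs N e"
  shows "(\<lambda>x. \<Sum>a\<in>A. c a * f a x) \<in> lincombs N e"
proof -
  obtain t where t: "\<And>a. a \<in> A \<Longrightarrow> f a = (\<lambda>x. \<Sum>i<N. t a i * e i x)"
    using assms(2) unfolding lincombs_iff by metis
  have "(\<Sum>a\<in>A. c a * f a x) = (\<Sum>i<N. (\<Sum>a\<in>A. c a * t a i) * e i x)" for x
    by (simp add: t sum_distrib_left sum_distrib_right mult.assoc sum.swap[of _ A] cong: sum.cong)
  then show ?thesis
    unfolding lincombs_iff by (intro exI[of _ "\<lambda>i. \<Sum>a\<in>A. c a * t a i"]) simp
qed

lemma lincombs_append:
  assumes "f \<in> lincombs N e"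
  shows "(\<lambda>x. f x + c * u x) \<in> lincombs (Suc N) (e(N := u))"
proof -
  obtain t where t: "f = (\<lambda>x. \<Sum>i<N. t i * e i x)"
    using assms by (auto simp: lincombs_iff)
  have "(\<Sum>i<N. (t(N := c)) i * (e(N := u)) i x) = (\<Sum>i<N. t i * e i x)" for x
    by (rule sum.cong) auto
  then have "(\<lambda>x. f x + c * u x) = (\<lambda>x. \<Sum>i<Suc N. (t(N := c)) i * (e(N := u)) i x)"
    by (simp add: t)
  then show ?thesis
    unfolding lincombs_iff by (rule exI[of _ "t(N := c)"])
qed

lemma orthonormal_forms: "orthonormal d N e \<Longrightarrow> i < N \<Longrightarrow> e i \<in> forms d"
  by (simp add: orthonormal_def)

lemma orthonormal_coeff:
  assumes "orthonormal d N e" "j < N"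
  shows "ip (\<lambda>x. \<Sum>i<N. t i * e i x) (e j) = t j"
proof -
  have "ip (\<lambda>x. \<Sum>i<N. t i * e i x) (e j) = (\<Sum>i<N. t i * ip (e i) (e j))"
    using assms by (intro ip_lincomb_left) (auto simp: orthonormal_def)
  also have "\<dots> = t j"
    using assms by (simp add: orthonormal_def if_distrib[of "\<lambda>c. _ * c"] cong: if_cong)
  finally show ?thesis .
qed

lemma orthonormal_norm:
  assumes "orthonormal d N e"
  shows "ip (\<lambda>x. \<Sum>i<N. t i * e i x) (\<lambda>x. \<Sum>i<N. t i * e i x) = (\<Sum>i<N. (t i)^2)"
proof -
  have "(\<lambda>x. \<Sum>i<N. t i * e i x) \<in> forms d"
    using assms by (intro forms_lincomb) (auto simp: orthonormal_def)
  then have "ip (\<lambda>x. \<Sum>i<N. t i * e i x) (\<lambda>x. \<Sum>i<N. t i * e i x)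
      = (\<Sum>j<N. t j * ip (\<lambda>x. \<Sum>i<N. t i * e i x) (e j))"
    using assms by (subst ip_sym, subst ip_lincomb_left) (auto simp: orthonormal_def ip_sym)
  also have "\<dots> = (\<Sum>j<N. (t j)^2)"
    using orthonormal_coeff[OF assms] by (simp add: power2_eq_square)
  finally show ?thesis .
qed

lemma orthonormal_basis_expansion:
  assumes "orthonormal_basis d N e" "f \<in> forms d"
  obtains t where "f = (\<lambda>x. \<Sum>i<N. t i * e i x)"
  using assms by (auto simp: orthonormal_basis_def lincombs_iff subset_iff)

lemma orthonormal_basis_orthonormal: "orthonormal_basis d N e \<Longrightarrow> orthonormal d N e"
  by (simp add: orthonormal_basis_def)

lemma orthonormal_append:
  assumes e: "orthonormal d N e" and u: "u \<in> forms d" "ip u u = 1"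
    and orth: "\<And>j. j < N \<Longrightarrow> ip u (e j) = 0"
  shows "orthonormal d (Suc N) (e(N := u))"
  unfolding orthonormal_def
proof (intro conjI allI impI)
  fix i j assume i: "i < Suc N" and j: "j < Suc N"
  consider "i = N" "j = N" | "i = N" "j < N" | "i < N" "j = N" | "i < N" "j < N"
    using i j by linarith
  then show "ip ((e(N := u)) i) ((e(N := u)) j) = (if i = j then 1 else 0)"
  proof cases
    case 3
    then show ?thesis
      using orth[of i] by (simp add: ip_sym[of "e i"])
  qed (use e u orth in \<open>simp_all add: orthonormal_def\<close>)
qed (use e u in \<open>auto simp: orthonormal_def less_Suc_eq\<close>)

lemma orthonormal_append_normalized:
  assumes e: "orthonormal d N e" and w: "w \<in> forms d" "ip w w \<noteq> 0"
    and orth: "\<And>j. j < N \<Longrightarrow> ip w (e j) = 0"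
  shows "orthonormal d (Suc N) (e(N := (\<lambda>x. (1 / sqrt (ip w w)) * w x)))"
proof -
  define r where "r = sqrt (ip w w)"
  have r: "0 < r" "r * r = ip w w"
    using w ip_nonneg[OF w(1)] by (simp_all add: r_def)
  define u where "u = (\<lambda>x. (1 / r) * w x)"
  have u: "u \<in> forms d"
    unfolding u_def using w(1) by (rule forms_cmult)
  have "ip u u = (1 / r) * ip w u"
    unfolding u_def by (rule ip_cmult_left)
  also have "ip w u = ip u w"
    by (rule ip_sym)
  also have "ip u w = (1 / r) * ip w w"
    unfolding u_def by (rule ip_cmult_left)
  finally have "ip u u = 1"
    using r w(2) by simp
  moreover have "ip u (e j) = 0" if "j < N" for j
    using orth[OF that] unfolding u_def ip_cmult_left by simp
  ultimately have "orthonormal d (Suc N) (e(N := u))"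
    using e u by (intro orthonormal_append)
  then show ?thesis
    by (simp add: u_def r_def)
qed

text \<open>Gram--Schmidt step: unless \<open>v\<close> lies in the span already, append the normalised
  component of \<open>v\<close> orthogonal to the family.\<close>
lemma orthonormal_extend:
  assumes e: "orthonormal d N e" and v: "v \<in> forms d"
  obtains N' e' where "N \<le> N'" "\<And>i. i < N \<Longrightarrow> e' i = e i" "orthonormal d N' e'"
    "v \<in> lincombs N' e'"
proof -
  define s where "s = (\<lambda>x. \<Sum>i<N. ip v (e i) * e i x)"
  define w where "w = (\<lambda>x. v x - s x)"
  have s: "s \<in> forms d"
    unfolding s_def using e by (intro forms_lincomb) (auto simp: orthonormal_def)
  then have w: "w \<in> forms d"
    unfolding w_def using v by (rule forms_diff[rotated])
  have w_orth: "ip w (e j) = 0" if "j < N" for j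
    using ip_diff_left[OF v s orthonormal_forms[OF e that]]
      orthonormal_coeff[OF e that, of "\<lambda>i. ip v (e i)"]
    by (simp add: w_def s_def)
  show ?thesis
  proof (cases "ip w w = 0")
    case True
    then have "v = s"
      using ip_self_eq_0[OF w] by (simp add: w_def fun_eq_iff)
    then show ?thesis
      using e by (intro that[of N e]) (auto simp: lincombs_iff s_def)
  next
    case False
    define r where "r = sqrt (ip w w)"
    have "0 < r"
      using False ip_nonneg[OF w] by (simp add: r_def)
    define e' where "e' = e(N := (\<lambda>x. (1 / r) * w x))"
    have "orthonormal d (Suc N) e'"
      unfolding e'_def r_def using e w False w_orth by (rule orthonormal_append_normalized)
    moreover have "s \<in> lincombs N e"
      unfolding s_def lincombs_iff by (rule exI[of _ "\<lambda>i. ip v (e i)"]) (rule refl)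
    then have "(\<lambda>x. s x + r * ((1 / r) * w x)) \<in> lincombs (Suc N) e'"
      unfolding e'_def by (rule lincombs_append)
    then have "v \<in> lincombs (Suc N) e'"
      using \<open>0 < r\<close> by (simp add: w_def)
    ultimately show ?thesis
      by (intro that[of "Suc N" e']) (auto simp: e'_def)
  qed
qed

lemma orthonormal_extend_finite:
  assumes "finite V" "V \<subseteq> forms d" "orthonormal d N e"
  shows "\<exists>N' e'. N \<le> N' \<and> (\<forall>i<N. e' i = e i) \<and> orthonormal d N' e' \<and> V \<subseteq> lincombs N' e'"
  using assms
proof (induction V rule: finite_induct)
  case empty
  then show ?case
    by (intro exI[of _ N] exI[of _ e]) simp
next
  case (insert v V)
  obtain N1 e1 where 1: "N \<le> N1" "\<forall>i<N. e1 i = e i" "orthonormal d N1 e1"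
    "V \<subseteq> lincombs N1 e1"
    using insert.IH insert.prems by blast
  obtain N2 e2 where 2: "N1 \<le> N2" "\<And>i. i < N1 \<Longrightarrow> e2 i = e1 i" "orthonormal d N2 e2"
    "v \<in> lincombs N2 e2"
    using orthonormal_extend[OF 1(3)] insert.prems by blast
  have "lincombs N1 e1 \<subseteq> lincombs N2 e2"
    using 2(1,2) by (rule lincombs_mono)
  then have "V \<subseteq> lincombs N2 e2"
    using 1(4) by blast
  then show ?case
    using 1 2 by (intro exI[of _ N2] exI[of _ e2]) auto
qed

lemma orthonormal_basis_exists:
  "\<exists>N (e :: nat \<Rightarrow> real^'n::finite \<Rightarrow> real). 0 < N \<and> e 0 = r2k k \<and> orthonormal_basis (2*k) N e"
proof -
  let ?V = "monomial ` mono_exps (2*k) :: (real^'n \<Rightarrow> real) set"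
  have "orthonormal (2*k) 1 (\<lambda>_. r2k k :: real^'n \<Rightarrow> real)"
    by (simp add: orthonormal_def r2k_forms ip_r2k_r2k)
  then have "\<exists>N e. 1 \<le> N \<and> (\<forall>i<1. e i = r2k k) \<and> orthonormal (2*k) N e \<and> ?V \<subseteq> lincombs N e"
    by (intro orthonormal_extend_finite) (auto simp: finite_mono_exps monomial_forms)
  then obtain N and e :: "nat \<Rightarrow> real^'n \<Rightarrow> real" where
    e: "1 \<le> N" "e 0 = r2k k" "orthonormal (2*k) N e" "?V \<subseteq> lincombs N e"
    by auto
  have "f \<in> lincombs N e" if f: "f \<in> forms (2*k)" for f :: "real^'n \<Rightarrow> real"
  proof -
    obtain c where "f = (\<lambda>x. \<Sum>\<alpha>\<in>mono_exps (2*k). c \<alpha> * monomial \<alpha> x)"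
      using f by (auto simp: forms_iff)
    moreover have "(\<lambda>x. \<Sum>\<alpha>\<in>mono_exps (2*k). c \<alpha> * monomial \<alpha> x) \<in> lincombs N e"
      using e(4) by (intro lincombs_lincomb finite_mono_exps) auto
    ultimately show ?thesis
      by simp
  qed
  then show ?thesis
    using e by (intro exI[of _ N] exI[of _ e]) (auto simp: orthonormal_basis_def)
qed

section \<open>The dimension of the space of forms\<close>

lemma digits_sum_less:
  fixes a :: "nat \<Rightarrow> nat"
  assumes "\<forall>l<n. a l < b"
  shows "(\<Sum>l<n. a l * b ^ l) < b ^ n"
  using assms
proof (induction n)
  case (Suc n)
  then have IH: "(\<Sum>l<n. a l * b ^ l) < b ^ n" and "a n < b"
    by auto
  then have "a n * b ^ n + b ^ n \<le> b * b ^ n"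
    using mult_le_mono1[of "Suc (a n)" b "b ^ n"] by simp
  then show ?case
    using IH by simp
qed simp

lemma digits_unique:
  fixes a a' :: "nat \<Rightarrow> nat"
  assumes "\<forall>l<n. a l < b" "\<forall>l<n. a' l < b" "(\<Sum>l<n. a l * b ^ l) = (\<Sum>l<n. a' l * b ^ l)"
  shows "\<forall>l<n. a l = a' l"
  using assms
proof (induction n)
  case (Suc n)
  define S S' where "S = (\<Sum>l<n. a l * b ^ l)" and "S' = (\<Sum>l<n. a' l * b ^ l)"
  have digits: "\<forall>l<n. a l < b" "\<forall>l<n. a' l < b"
    using Suc.prems(1,2) by simp_all
  then have S: "S < b ^ n" "S' < b ^ n"
    unfolding S_def S'_def by (simp_all add: digits_sum_less)
  moreover have "0 < b ^ n"
    using S(1) by linarith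
  ultimately have "(S + a n * b ^ n) div b ^ n = a n" "(S' + a' n * b ^ n) div b ^ n = a' n"
    by simp_all
  moreover have eq: "S + a n * b ^ n = S' + a' n * b ^ n"
    using Suc.prems(3) by (simp add: S_def S'_def)
  ultimately have "a n = a' n"
    by simp
  with eq have "S = S'"
    by simp
  then have "\<forall>l<n. a l = a' l"
    using Suc.IH digits unfolding S_def S'_def by blast
  with \<open>a n = a' n\<close> show ?case
    using less_Suc_eq by auto
qed simp

lemma mono_exps_weight_inj:
  fixes idx :: "'n::finite \<Rightarrow> nat"
  assumes idx: "bij_betw idx UNIV {..<CARD('n)}"
    and \<alpha>: "\<alpha> \<in> mono_exps d" and \<beta>: "\<beta> \<in> mono_exps d"
    and eq: "(\<Sum>i\<in>UNIV. \<alpha> i * Suc d ^ idx i) = (\<Sum>i\<in>UNIV. \<beta> i * Suc d ^ idx i)"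
  shows "\<alpha> = \<beta>"
proof -
  define iv where "iv = inv_into UNIV idx"
  have iv: "iv (idx i) = i" for i
    using idx by (simp add: iv_def bij_betw_def)
  have digits: "(\<Sum>i\<in>UNIV. \<gamma> i * Suc d ^ idx i) = (\<Sum>l<CARD('n). \<gamma> (iv l) * Suc d ^ l)"
    for \<gamma> :: "'n \<Rightarrow> nat"
    using sum.reindex_bij_betw[OF idx, of "\<lambda>l. \<gamma> (iv l) * Suc d ^ l"] by (simp add: iv)
  have "\<forall>l<CARD('n). \<alpha> (iv l) = \<beta> (iv l)"
    by (rule digits_unique[where b="Suc d"])
       (use eq digits mono_exps_le[OF \<alpha>] mono_exps_le[OF \<beta>] in \<open>auto simp: le_imp_less_Suc\<close>)
  moreover have "idx i < CARD('n)" for i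
    using idx by (auto simp: bij_betw_def)
  ultimately show ?thesis
    using iv by (metis ext)
qed

text \<open>Substituting \<open>x\<^sub>i = t ^ (d+1)^(idx i)\<close> turns distinct monomials of degree \<open>d\<close> into
  distinct powers of \<open>t\<close>, because exponents \<open>\<le> d\<close> are digits in base \<open>d+1\<close>.\<close>
lemma monomial_coeffs_eq_0:
  fixes c :: "('n::finite \<Rightarrow> nat) \<Rightarrow> real"
  assumes zero: "\<And>x::real^'n. (\<Sum>\<alpha>\<in>mono_exps d. c \<alpha> * monomial \<alpha> x) = 0"
    and \<beta>: "\<beta> \<in> mono_exps d"
  shows "c \<beta> = 0"
proof -
  obtain idx :: "'n \<Rightarrow> nat" where idx: "bij_betw idx UNIV {..<CARD('n)}"
    using ex_bij_betw_finite_nat[of "UNIV :: 'n set"] by (auto simp: atLeast0LessThan)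
  define w where "w \<alpha> = (\<Sum>i\<in>UNIV. \<alpha> i * Suc d ^ idx i)" for \<alpha> :: "'n \<Rightarrow> nat"
  define p where "p = (\<Sum>\<alpha>\<in>mono_exps d. monom (c \<alpha>) (w \<alpha>))"
  have "monomial \<alpha> (\<chi> i. t ^ (Suc d ^ idx i)) = t ^ w \<alpha>" for \<alpha> :: "'n \<Rightarrow> nat" and t :: real
    by (simp add: monomial_def w_def power_sum power_mult[symmetric] mult.commute)
  then have "poly p t = 0" for t
    using zero[of "\<chi> i. t ^ (Suc d ^ idx i)"] by (simp add: p_def poly_sum poly_monom)
  then have "p = 0"
    using poly_all_0_iff_0 by blast
  have "coeff p (w \<beta>) = (\<Sum>\<alpha>\<in>mono_exps d. if \<alpha> = \<beta> then c \<alpha> else 0)"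
    unfolding p_def coeff_sum coeff_monom
  proof (rule sum.cong)
    fix \<alpha> :: "'n \<Rightarrow> nat" assume "\<alpha> \<in> mono_exps d"
    then have "w \<alpha> = w \<beta> \<longleftrightarrow> \<alpha> = \<beta>"
      using mono_exps_weight_inj[OF idx _ \<beta>] by (auto simp: w_def)
    then show "(if w \<alpha> = w \<beta> then c \<alpha> else 0) = (if \<alpha> = \<beta> then c \<alpha> else 0)"
      by simp
  qed simp
  also have "\<dots> = c \<beta>"
    using \<beta> by (simp add: sum.delta[OF finite_mono_exps])
  finally show ?thesis
    using \<open>p = 0\<close> by simp
qed

lemma card_mono_exps: "card (mono_exps d :: ('n::finite \<Rightarrow> nat) set) = (CARD('n) + d - 1) choose d"
proof -
  have size_eq: "size X = (\<Sum>i\<in>UNIV. count X i)" for X :: "'n multiset"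
    by (simp add: size_multiset_overloaded_eq sum.mono_neutral_left not_in_iff)
  have "bij_betw count (multisets_of_size (UNIV :: 'n set) d) (mono_exps d)"
  proof (rule bij_betw_imageI)
    show "inj_on count (multisets_of_size (UNIV :: 'n set) d)"
      by (auto simp: inj_on_def multiset_eq_iff)
    have "\<alpha> \<in> count ` multisets_of_size UNIV d" if "\<alpha> \<in> mono_exps d" for \<alpha> :: "'n \<Rightarrow> nat"
      using that count_Abs_multiset[of \<alpha>]
      by (auto simp: multisets_of_size_def mono_exps_def size_eq intro!: image_eqI[of _ _ "Abs_multiset \<alpha>"])
    then show "count ` multisets_of_size (UNIV :: 'n set) d = mono_exps d"
      by (auto simp: multisets_of_size_def mono_exps_def size_eq)
  qed
  then have "card (mono_exps d :: ('n \<Rightarrow> nat) set) = card (multisets_of_size (UNIV :: 'n set) d)"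
    by (simp add: bij_betw_same_card)
  also have "\<dots> = (CARD('n) + d - 1) choose d"
    by (rule card_multisets_of_size) simp
  finally show ?thesis .
qed

interpretation fun_space: vector_space "\<lambda>(c::real) (f::'a \<Rightarrow> real) x. c * f x"
  by unfold_locales (auto simp: fun_eq_iff algebra_simps)

lemma sum_fun_apply: "(\<Sum>v\<in>A. (g v :: 'a \<Rightarrow> real)) x = (\<Sum>v\<in>A. g v x)"
  by (induction A rule: infinite_finite_induct) auto

lemma lincomb_in_span:
  assumes "finite A" "\<And>a. a \<in> A \<Longrightarrow> f a \<in> fun_space.span S"
  shows "(\<lambda>x. \<Sum>a\<in>A. t a * f a x) \<in> fun_space.span S"
proof -
  have "(\<lambda>x. \<Sum>a\<in>A. t a * f a x) = (\<Sum>a\<in>A. (\<lambda>x. t a * f a x))"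
    by (simp add: fun_eq_iff sum_fun_apply)
  then show ?thesis
    using assms by (simp add: fun_space.span_sum fun_space.span_scale)
qed

lemma orthonormal_inj:
  assumes "orthonormal d N e"
  shows "inj_on e {..<N}"
proof (rule inj_onI)
  fix i j assume "i \<in> {..<N}" "j \<in> {..<N}" "e i = e j"
  moreover from this(1,2) have "ip (e i) (e i) = 1" "ip (e i) (e j) = (if i = j then 1 else 0)"
    using assms by (simp_all add: orthonormal_def)
  ultimately show "i = j"
    by (simp split: if_splits)
qed

lemma orthonormal_independent:
  assumes e: "orthonormal d N e"
  shows "fun_space.independent (e ` {..<N})"
proof (rule fun_space.independent_if_scalars_zero)
  fix u v assume zero: "(\<Sum>v\<in>e ` {..<N}. (\<lambda>x. u v * v x)) = 0" and v: "v \<in> e ` {..<N}"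
  from v obtain j where j: "j < N" "v = e j"
    by auto
  have "(\<lambda>x. \<Sum>i<N. u (e i) * e i x) = (\<lambda>x. 0)"
    using zero by (simp add: sum.reindex[OF orthonormal_inj[OF e]] fun_eq_iff sum_fun_apply)
  then have "ip (\<lambda>x. \<Sum>i<N. u (e i) * e i x) (e j) = 0"
    by (simp add: ip_def sint_def)
  then show "u v = 0"
    using orthonormal_coeff[OF e j(1)] j(2) by simp
qed simp

lemma inj_on_monomial: "inj_on monomial (mono_exps d :: ('n::finite \<Rightarrow> nat) set)"
proof (rule inj_onI)
  fix \<alpha> \<beta> :: "'n \<Rightarrow> nat"
  assume \<alpha>\<beta>: "\<alpha> \<in> mono_exps d" "\<beta> \<in> mono_exps d" "monomial \<alpha> = monomial \<beta>"
  show "\<alpha> = \<beta>"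
  proof (rule ccontr)
    assume "\<alpha> \<noteq> \<beta>"
    define c where "c \<gamma> = (if \<gamma> = \<alpha> then 1 else if \<gamma> = \<beta> then -1 else (0::real))" for \<gamma>
    have "(\<Sum>\<gamma>\<in>mono_exps d. c \<gamma> * monomial \<gamma> x) = 0" for x
    proof -
      have "(\<Sum>\<gamma>\<in>mono_exps d. c \<gamma> * monomial \<gamma> x) = (\<Sum>\<gamma>\<in>mono_exps d.
          (if \<gamma> = \<alpha> then monomial \<alpha> x else 0) - (if \<gamma> = \<beta> then monomial \<beta> x else 0))"
        by (rule sum.cong) (use \<alpha>\<beta> \<open>\<alpha> \<noteq> \<beta>\<close> in \<open>auto simp: c_def\<close>)
      also have "\<dots> = 0"
        using \<alpha>\<beta> by (simp add: sum_subtractf sum.delta[OF finite_mono_exps])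
      finally show ?thesis .
    qed
    then have "c \<alpha> = 0"
      using monomial_coeffs_eq_0 \<alpha>\<beta>(1) by blast
    then show False
      by (simp add: c_def)
  qed
qed

lemma monomials_independent:
  "fun_space.independent (monomial ` mono_exps d :: (real^'n::finite \<Rightarrow> real) set)"
proof (rule fun_space.independent_if_scalars_zero)
  fix u :: "(real^'n \<Rightarrow> real) \<Rightarrow> real" and v :: "real^'n \<Rightarrow> real"
  assume zero: "(\<Sum>v\<in>monomial ` mono_exps d. (\<lambda>x. u v * v x)) = 0"
    and v: "v \<in> monomial ` mono_exps d"
  from v obtain \<beta> where \<beta>: "\<beta> \<in> mono_exps d" "v = monomial \<beta>"
    by blast
  have "(\<Sum>v\<in>monomial ` mono_exps d. (\<lambda>x. u v * v x))
      = (\<Sum>\<alpha>\<in>mono_exps d. (\<lambda>x::real^'n. u (monomial \<alpha>) * monomial \<alpha> x))"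
    by (rule sum.reindex[OF inj_on_monomial, unfolded comp_def])
  then have "(\<Sum>\<alpha>\<in>mono_exps d. u (monomial \<alpha>) * monomial \<alpha> x) = 0" for x :: "real^'n"
    using zero by (simp add: fun_eq_iff sum_fun_apply)
  then show "u v = 0"
    using monomial_coeffs_eq_0[of "\<lambda>\<alpha>. u (monomial \<alpha>)" d \<beta>] \<beta> by simp
qed (simp add: finite_mono_exps)

lemma forms_subset_span: "forms d \<subseteq> fun_space.span (monomial ` mono_exps d)"
proof
  fix f assume "f \<in> forms d"
  then obtain c where "f = (\<lambda>x. \<Sum>\<alpha>\<in>mono_exps d. c \<alpha> * monomial \<alpha> x)"
    by (auto simp: forms_iff)
  then show "f \<in> fun_space.span (monomial ` mono_exps d)"
    by (simp add: lincomb_in_span finite_mono_exps fun_space.span_base)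
qed

lemma lincombs_subset_span: "lincombs N e \<subseteq> fun_space.span (e ` {..<N})"
proof
  fix f assume "f \<in> lincombs N e"
  then obtain t where "f = (\<lambda>x. \<Sum>i<N. t i * e i x)"
    by (auto simp: lincombs_iff)
  moreover have "(\<lambda>x. \<Sum>i<N. t i * e i x) \<in> fun_space.span (e ` {..<N})"
    by (rule lincomb_in_span) (auto intro: fun_space.span_base)
  ultimately show "f \<in> fun_space.span (e ` {..<N})"
    by simp
qed

lemma orthonormal_basis_card:
  assumes "orthonormal_basis d N (e :: nat \<Rightarrow> real^'n::finite \<Rightarrow> real)"
  shows "N = card (mono_exps d :: ('n \<Rightarrow> nat) set)"
proof -
  let ?E = "e ` {..<N}" and ?M = "monomial ` mono_exps d :: (real^'n \<Rightarrow> real) set"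
  have e: "orthonormal d N e" "forms d \<subseteq> lincombs N e"
    using assms by (simp_all add: orthonormal_basis_def)
  have "?E \<subseteq> fun_space.span ?M"
    using e(1) forms_subset_span by (auto simp: orthonormal_def)
  then have "card ?E \<le> card ?M"
    using fun_space.independent_span_bound[OF _ orthonormal_independent[OF e(1)]]
      finite_mono_exps by blast
  moreover have "?M \<subseteq> fun_space.span ?E"
    using e(2) lincombs_subset_span monomial_forms by blast
  then have "card ?M \<le> card ?E"
    using fun_space.independent_span_bound[OF _ monomials_independent] by blast
  ultimately show ?thesis
    by (simp add: card_image orthonormal_inj[OF e(1)] inj_on_monomial)
qed

section \<open>The diagonal of the reproducing kernel\<close>

definition kernel_diag :: "nat \<Rightarrow> (nat \<Rightarrow> 'a \<Rightarrow> real) \<Rightarrow> 'a \<Rightarrow> real" where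
  "kernel_diag N e x = (\<Sum>i<N. (e i x)^2)"

text \<open>Bessel's inequality for the form \<open>y \<mapsto> \<Sum>\<^sub>i e\<^sub>i(x) e\<^sub>i(y)\<close>, combined with
  Cauchy--Schwarz for its expansion in the basis \<open>e'\<close>.\<close>
lemma kernel_diag_le:
  assumes e: "orthonormal d N e" and e': "orthonormal_basis d N' e'"
  shows "kernel_diag N e x \<le> kernel_diag N' e' x"
proof -
  define K where "K = (\<lambda>y. \<Sum>i<N. e i x * e i y)"
  have "K \<in> forms d"
    unfolding K_def using e by (intro forms_lincomb) (auto simp: orthonormal_def)
  then obtain t where t: "K = (\<lambda>y. \<Sum>i<N'. t i * e' i y)"
    using e' orthonormal_basis_expansion by blast
  have "kernel_diag N e x = ip K K"
    unfolding K_def kernel_diag_def using orthonormal_norm[OF e, of "\<lambda>i. e i x"] by simp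
  also have "\<dots> = (\<Sum>i<N'. (t i)^2)"
    unfolding t by (rule orthonormal_norm[OF orthonormal_basis_orthonormal[OF e']])
  finally have norm_K: "kernel_diag N e x = (\<Sum>i<N'. (t i)^2)" .
  have "kernel_diag N e x = K x"
    by (simp add: K_def kernel_diag_def power2_eq_square)
  also have "\<dots> = (\<Sum>i<N'. t i * e' i x)"
    by (simp add: t)
  finally have "(kernel_diag N e x)^2 \<le> (\<Sum>i<N'. (t i)^2) * (\<Sum>i<N'. (e' i x)^2)"
    by (simp only: Cauchy_Schwarz_ineq_sum)
  then have "(kernel_diag N e x)^2 \<le> kernel_diag N e x * kernel_diag N' e' x"
    by (simp only: norm_K[symmetric] kernel_diag_def[of N' e', symmetric])
  moreover have "0 \<le> kernel_diag N e x" "0 \<le> kernel_diag N' e' x"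
    by (simp_all add: kernel_diag_def sum_nonneg)
  ultimately show ?thesis
    by (cases "kernel_diag N e x = 0") (simp_all add: power2_eq_square mult_le_cancel_left)
qed

lemma orthonormal_basis_orthogonal_comp:
  fixes T :: "real^'n::finite \<Rightarrow> real^'n"
  assumes e: "orthonormal_basis d N e" and T: "orthogonal_transformation T"
  shows "orthonormal_basis d N (\<lambda>i x. e i (T x))"
proof -
  have lin: "linear T"
    using T by (rule orthogonal_transformation_linear)
  have e_forms: "\<And>i. i < N \<Longrightarrow> e i \<in> forms d"
    using e by (simp add: orthonormal_basis_def orthonormal_def)
  have "ip (\<lambda>x. e i (T x)) (\<lambda>x. e j (T x)) = ip (e i) (e j)" if "i < N" "j < N" for i j
    unfolding ip_def using T forms_mult_continuous[OF e_forms[OF that(1)] e_forms[OF that(2)]]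
    by (rule sint_orthogonal)
  then have "orthonormal d N (\<lambda>i x. e i (T x))"
    using e forms_linear_comp[OF lin e_forms]
    by (simp add: orthonormal_basis_def orthonormal_def)
  moreover have "f \<in> lincombs N (\<lambda>i x. e i (T x))" if f: "f \<in> forms d" for f :: "real^'n \<Rightarrow> real"
  proof -
    have Ti: "orthogonal_transformation (inv T)"
      using T by (rule orthogonal_transformation_inv)
    have "(\<lambda>x. f (inv T x)) \<in> forms d"
      by (rule forms_linear_comp[OF orthogonal_transformation_linear[OF Ti] f])
    then obtain t where "(\<lambda>x. f (inv T x)) = (\<lambda>x. \<Sum>i<N. t i * e i x)"
      using e orthonormal_basis_expansion by blast
    then have "f x = (\<Sum>i<N. t i * e i (T x))" for x
      using fun_cong[of _ _ "T x"] orthogonal_transformation_inj[OF T] by (metis inv_f_f)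
    then show ?thesis
      by (auto simp: lincombs_iff)
  qed
  ultimately show ?thesis
    by (auto simp: orthonormal_basis_def)
qed

lemma kernel_diag_orthogonal:
  fixes T :: "real^'n::finite \<Rightarrow> real^'n"
  assumes e: "orthonormal_basis d N e" and T: "orthogonal_transformation T"
  shows "kernel_diag N e (T x) = kernel_diag N e x"
proof -
  have eT: "orthonormal_basis d N (\<lambda>i x. e i (T x))"
    using e T by (rule orthonormal_basis_orthogonal_comp)
  have "kernel_diag N e (T x) = kernel_diag N (\<lambda>i x. e i (T x)) x"
    by (simp add: kernel_diag_def)
  moreover have "kernel_diag N (\<lambda>i x. e i (T x)) x \<le> kernel_diag N e x"
    using e eT by (intro kernel_diag_le) (simp_all add: orthonormal_basis_def)
  moreover have "kernel_diag N e x \<le> kernel_diag N (\<lambda>i x. e i (T x)) x"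
    using e eT by (intro kernel_diag_le) (simp_all add: orthonormal_basis_def)
  ultimately show ?thesis
    by simp
qed

text \<open>Rotations act transitively on the sphere, so the kernel diagonal is constant there;
  its integral is the sum of the squared norms of the basis elements.\<close>
lemma kernel_diag_sphere:
  fixes e :: "nat \<Rightarrow> real^'n::finite \<Rightarrow> real"
  assumes e: "orthonormal_basis d N e" and x: "norm x = 1"
  shows "kernel_diag N e x = real N"
proof -
  have e_forms: "\<And>i. i < N \<Longrightarrow> e i \<in> forms d"
    using e by (simp add: orthonormal_basis_def orthonormal_def)
  have cont: "continuous_on UNIV (kernel_diag N e)"
    unfolding kernel_diag_def using e_forms forms_continuous by (auto intro!: continuous_intros)
  have "sint (kernel_diag N e) = (\<Sum>i<N. sint (\<lambda>y. e i y * e i y))"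
    unfolding kernel_diag_def power2_eq_square
    using e_forms by (intro sint_sum) (auto intro: forms_mult_continuous)
  also have "\<dots> = real N"
    using e by (simp add: orthonormal_basis_def orthonormal_def flip: ip_def)
  finally have "sint (kernel_diag N e) = real N" .
  moreover have "kernel_diag N e y = kernel_diag N e x" if y: "norm y = 1" for y
  proof -
    obtain T where "orthogonal_transformation T" "T x = y"
      using orthogonal_transformation_exists[of x y] x y by auto
    then show ?thesis
      using kernel_diag_orthogonal[OF e] by metis
  qed
  then have "sint (kernel_diag N e) = sint (\<lambda>y::real^'n. kernel_diag N e x)"
    using cont by (intro sint_cong_sphere) auto
  ultimately show ?thesis
    by (simp add: sint_const)
qed

section \<open>Orthonormal bases of \<open>M\<^sub>0\<close>\<close>

lemma r2k_in_Mset: "r2k k \<in> Mset k"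
  by (simp add: Mset_def r2k_forms sint_r2k)

lemma r2k_continuous: "continuous_on UNIV (r2k k)"
  by (rule forms_continuous[OF r2k_forms])

lemma onb_M0_orthonormal: "onb_M0 k m g \<Longrightarrow> orthonormal (2*k) m g"
  by (simp add: onb_M0_def orthonormal_def)

lemma onb_M0_expansion:
  fixes g :: "nat \<Rightarrow> real^'n::finite \<Rightarrow> real"
  assumes g: "onb_M0 k m g" and f: "f \<in> Mset k"
  obtains t where "(\<lambda>x. f x - r2k k x) = (\<lambda>x. \<Sum>i<m. t i * g i x)"
proof -
  have f: "f \<in> forms (2*k)" "sint f = 1"
    using f by (simp_all add: Mset_def)
  then have "(\<lambda>x. f x - r2k k x) \<in> forms (2*k)" "sint (\<lambda>x. f x - r2k k x) = 0"
    by (simp_all add: forms_diff r2k_forms sint_diff forms_continuous r2k_continuous sint_r2k)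
  then show ?thesis
    using g that by (auto simp: onb_M0_def)
qed

lemma r2k_plus_lincomb_in_Mset:
  fixes g :: "nat \<Rightarrow> real^'n::finite \<Rightarrow> real"
  assumes g: "onb_M0 k m g"
  shows "(\<lambda>x. r2k k x + (\<Sum>i<m. t i * g i x)) \<in> Mset k"
proof -
  have g_forms: "\<And>i. i < m \<Longrightarrow> g i \<in> forms (2*k)" and "\<And>i. i < m \<Longrightarrow> sint (g i) = 0"
    using g by (auto simp: onb_M0_def)
  then have "sint (\<lambda>x. \<Sum>i<m. t i * g i x) = 0"
    by (subst sint_lincomb) auto
  moreover have "(\<lambda>x. \<Sum>i<m. t i * g i x) \<in> forms (2*k)"
    using g_forms by (intro forms_lincomb) auto
  ultimately show ?thesis
    by (simp add: Mset_def forms_add r2k_forms sint_add r2k_continuous forms_continuous sint_r2k)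
qed

lemma fnorm_lincomb:
  "orthonormal d m g \<Longrightarrow> fnorm (\<lambda>x. \<Sum>i<m. t i * g i x) = sqrt (\<Sum>i<m. (t i)^2)"
  by (simp add: fnorm_def orthonormal_norm)

text \<open>Appending \<open>r\<^sup>2\<^sup>k\<close>, which is orthogonal to \<open>M\<^sub>0\<close> since \<open>\<langle>f, r\<^sup>2\<^sup>k\<rangle> = \<integral> f d\<sigma>\<close>,
  completes an orthonormal basis of \<open>M\<^sub>0\<close> to one of \<open>P\<^sub>n\<^sub>,\<^sub>2\<^sub>k\<close>.\<close>
lemma onb_M0_orthonormal_basis:
  fixes g :: "nat \<Rightarrow> real^'n::finite \<Rightarrow> real"
  assumes g: "onb_M0 k m g"
  shows "orthonormal_basis (2*k) (Suc m) (g(m := r2k k))"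
proof -
  have "ip (r2k k) (g j) = 0" if "j < m" for j
    using g that ip_r2k[OF forms_continuous, of "g j" "2*k" k]
    by (simp add: onb_M0_def ip_sym)
  then have "orthonormal (2*k) (Suc m) (g(m := r2k k))"
    using onb_M0_orthonormal[OF g]
    by (intro orthonormal_append) (simp_all add: r2k_forms ip_r2k_r2k)
  moreover have "f \<in> lincombs (Suc m) (g(m := r2k k))" if f: "f \<in> forms (2*k)"
    for f :: "real^'n \<Rightarrow> real"
  proof -
    have "(\<lambda>x. f x - sint f * r2k k x) \<in> forms (2*k)" "sint (\<lambda>x. f x - sint f * r2k k x) = 0"
      using f by (simp_all add: forms_diff forms_cmult r2k_forms sint_diff forms_continuous
          continuous_on_mult_left r2k_continuous sint_cmult sint_r2k)
    then have "(\<lambda>x. f x - sint f * r2k k x) \<in> lincombs m g"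
      using g by (auto simp: onb_M0_def lincombs_iff)
    then have "(\<lambda>x. (f x - sint f * r2k k x) + sint f * r2k k x) \<in> lincombs (Suc m) (g(m := r2k k))"
      by (rule lincombs_append)
    then show ?thesis
      by simp
  qed
  ultimately show ?thesis
    by (simp add: orthonormal_basis_def subset_iff)
qed

lemma onb_M0_exists: "\<exists>m (g :: nat \<Rightarrow> real^'n::finite \<Rightarrow> real). onb_M0 k m g"
proof -
  obtain N and e :: "nat \<Rightarrow> real^'n \<Rightarrow> real" where
    e: "0 < N" "e 0 = r2k k" "orthonormal_basis (2*k) N e"
    using orthonormal_basis_exists by blast
  have e_on: "orthonormal (2*k) N e"
    using e(3) by (rule orthonormal_basis_orthonormal)
  have sint_eq_ip: "sint f = ip f (e 0)" if "f \<in> forms (2*k)" for f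
    using that e(2) by (simp add: ip_r2k forms_continuous)
  have "sint (e (Suc i)) = 0" if "i < N - 1" for i
    using that e_on sint_eq_ip[OF orthonormal_forms[OF e_on]] by (simp add: orthonormal_def)
  moreover have "f \<in> lincombs (N - 1) (\<lambda>i. e (Suc i))" if f: "f \<in> forms (2*k)" "sint f = 0" for f
  proof -
    obtain t where t: "f = (\<lambda>x. \<Sum>i<N. t i * e i x)"
      using e(3) f(1) orthonormal_basis_expansion by blast
    then have "t 0 = 0"
      using e(1) f sint_eq_ip orthonormal_coeff[OF e_on, of 0 t] by simp
    then have "f x = (\<Sum>i<N - 1. t (Suc i) * e (Suc i) x)" for x
      using e(1) t sum.lessThan_Suc_shift[of "\<lambda>i. t i * e i x" "N - 1"] by simp
    then have "f = (\<lambda>x. \<Sum>i<N - 1. t (Suc i) * e (Suc i) x)"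
      by (rule ext)
    then show ?thesis
      unfolding lincombs_iff by (rule exI[of _ "\<lambda>i. t (Suc i)"])
  qed
  ultimately have "onb_M0 k (N - 1) (\<lambda>i. e (Suc i))"
    using e_on by (auto simp: onb_M0_def orthonormal_def lincombs_iff)
  then show ?thesis
    by blast
qed

lemma onb_M0_dim:
  fixes g :: "nat \<Rightarrow> real^'n::finite \<Rightarrow> real"
  assumes "onb_M0 k m g"
  shows "Suc m = (CARD('n) + 2*k - 1) choose (2*k)"
  using orthonormal_basis_card[OF onb_M0_orthonormal_basis[OF assms]] by (simp add: card_mono_exps)

lemma onb_M0_sum_squares_sphere:
  fixes g :: "nat \<Rightarrow> real^'n::finite \<Rightarrow> real"
  assumes g: "onb_M0 k m g" and x: "norm x = 1"
  shows "(\<Sum>i<m. (g i x)^2) = real m"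
proof -
  have "(\<Sum>i<m. ((g(m := r2k k)) i x)^2) = (\<Sum>i<m. (g i x)^2)"
    by (rule sum.cong) auto
  then have "kernel_diag (Suc m) (g(m := r2k k)) x = (\<Sum>i<m. (g i x)^2) + 1"
    by (simp add: kernel_diag_def r2k_sphere[OF x])
  then show ?thesis
    using kernel_diag_sphere[OF onb_M0_orthonormal_basis[OF g] x] by simp
qed

lemma rho_eq_onb_M0:
  fixes g :: "nat \<Rightarrow> real^'n::finite \<Rightarrow> real"
  assumes "CARD('n) \<ge> 2" "k \<ge> 1" "onb_M0 k m g"
  shows "0 < m" "rho CARD('n) k = 1 / sqrt (real m)"
proof -
  have m: "Suc m = (CARD('n) + 2*k - 1) choose (2*k)"
    using assms(3) by (rule onb_M0_dim)
  have "Suc (2*k) choose (2*k) \<le> (CARD('n) + 2*k - 1) choose (2*k)"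
    using assms(1) by (intro binomial_right_mono) simp
  then show "0 < m"
    using assms(2) m by simp
  show "rho CARD('n) k = 1 / sqrt (real m)"
    unfolding rho_def m[symmetric] by simp
qed

section \<open>Ellipsoids inside \<open>C\<close>\<close>

lemma abs_sum_mult_le_sqrt:
  fixes u v :: "'a \<Rightarrow> real"
  shows "\<bar>\<Sum>i\<in>A. u i * v i\<bar> \<le> sqrt (\<Sum>i\<in>A. (u i)^2) * sqrt (\<Sum>i\<in>A. (v i)^2)"
proof -
  have "sqrt ((\<Sum>i\<in>A. u i * v i)^2) \<le> sqrt ((\<Sum>i\<in>A. (u i)^2) * (\<Sum>i\<in>A. (v i)^2))"
    by (rule real_sqrt_le_mono[OF Cauchy_Schwarz_ineq_sum])
  then show ?thesis
    by (simp add: real_sqrt_mult)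
qed

lemma ball_subset_Cbar:
  fixes g :: "nat \<Rightarrow> real^'n::finite \<Rightarrow> real"
  assumes g: "onb_M0 k m g" and m: "0 < m"
  shows "{f \<in> Mset k. fnorm (\<lambda>x. f x - r2k k x) \<le> 1 / sqrt (real m)}
    \<subseteq> (Cbar k :: (real^'n \<Rightarrow> real) set)"
proof
  fix f :: "real^'n \<Rightarrow> real"
  assume "f \<in> {f \<in> Mset k. fnorm (\<lambda>x. f x - r2k k x) \<le> 1 / sqrt (real m)}"
  then have f: "f \<in> Mset k" and close: "fnorm (\<lambda>x. f x - r2k k x) \<le> 1 / sqrt (real m)"
    by auto
  obtain t where t: "(\<lambda>x. f x - r2k k x) = (\<lambda>x. \<Sum>i<m. t i * g i x)"
    using onb_M0_expansion[OF g f] by blast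
  have t_small: "sqrt (\<Sum>i<m. (t i)^2) \<le> 1 / sqrt (real m)"
    using close by (simp add: t fnorm_lincomb[OF onb_M0_orthonormal[OF g]])
  have "0 \<le> f x" if x: "norm x = 1" for x
  proof -
    have "\<bar>\<Sum>i<m. t i * g i x\<bar> \<le> sqrt (\<Sum>i<m. (t i)^2) * sqrt (\<Sum>i<m. (g i x)^2)"
      by (rule abs_sum_mult_le_sqrt)
    also have "\<dots> = sqrt (\<Sum>i<m. (t i)^2) * sqrt (real m)"
      by (simp add: onb_M0_sum_squares_sphere[OF g x])
    also have "\<dots> \<le> 1 / sqrt (real m) * sqrt (real m)"
      by (rule mult_right_mono[OF t_small]) simp
    also have "\<dots> = 1"
      using m by simp
    finally show ?thesis
      using fun_cong[OF t, of x] r2k_sphere[OF x] by simp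
  qed
  then show "f \<in> Cbar k"
    using f forms_nonneg_sphere[of f "2*k"] by (auto simp: Cbar_def Ccone_def Mset_def)
qed

lemma ellipsoid_r2k_eq_ball:
  fixes g :: "nat \<Rightarrow> real^'n::finite \<Rightarrow> real"
  assumes g: "onb_M0 k m g" and r: "0 < r"
  shows "ellipsoid (r2k k) g (\<lambda>_. r) m = {f \<in> Mset k. fnorm (\<lambda>x. f x - r2k k x) \<le> r}"
proof -
  have norm_t: "(\<Sum>i<m. (t i / r)^2) \<le> 1 \<longleftrightarrow> sqrt (\<Sum>i<m. (t i)^2) \<le> r" for t
  proof -
    have "(\<Sum>i<m. (t i / r)^2) = (\<Sum>i<m. (t i)^2) / r^2"
      by (simp add: power_divide sum_divide_distrib)
    then show ?thesis
      using r by (simp add: real_sqrt_le_iff' sum_nonneg)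
  qed
  show ?thesis
  proof (intro set_eqI iffI)
    fix f :: "real^'n \<Rightarrow> real" assume "f \<in> ellipsoid (r2k k) g (\<lambda>_. r) m"
    then obtain t where "f = (\<lambda>x. r2k k x + (\<Sum>i<m. t i * g i x))" "(\<Sum>i<m. (t i / r)^2) \<le> 1"
      by (auto simp: ellipsoid_def)
    then show "f \<in> {f \<in> Mset k. fnorm (\<lambda>x. f x - r2k k x) \<le> r}"
      using r2k_plus_lincomb_in_Mset[OF g] norm_t
      by (simp add: fnorm_lincomb[OF onb_M0_orthonormal[OF g]])
  next
    fix f :: "real^'n \<Rightarrow> real" assume f: "f \<in> {f \<in> Mset k. fnorm (\<lambda>x. f x - r2k k x) \<le> r}"
    then obtain t where t: "(\<lambda>x. f x - r2k k x) = (\<lambda>x. \<Sum>i<m. t i * g i x)"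
      using onb_M0_expansion[OF g] by blast
    then have "f x = r2k k x + (\<Sum>i<m. t i * g i x)" for x
      using fun_cong[OF t, of x] by simp
    then have "f = (\<lambda>x. r2k k x + (\<Sum>i<m. t i * g i x))"
      by (rule ext)
    moreover have "(\<Sum>i<m. (t i / r)^2) \<le> 1"
      using f norm_t by (simp add: t fnorm_lincomb[OF onb_M0_orthonormal[OF g]])
    ultimately show "f \<in> ellipsoid (r2k k) g (\<lambda>_. r) m"
      by (auto simp: ellipsoid_def)
  qed
qed

text \<open>The linear form \<open>t \<mapsto> \<Sum>\<^sub>i t\<^sub>i v\<^sub>i\<close> attains its minimum \<open>-(\<Sum>\<^sub>i (a\<^sub>i v\<^sub>i)\<^sup>2)\<^sup>1\<^sup>/\<^sup>2\<close> over
  the ellipsoid \<open>\<Sum>\<^sub>i (t\<^sub>i/a\<^sub>i)\<^sup>2 \<le> 1\<close> at \<open>t\<^sub>i = -a\<^sub>i\<^sup>2 v\<^sub>i / (\<Sum>\<^sub>j (a\<^sub>j v\<^sub>j)\<^sup>2)\<^sup>1\<^sup>/\<^sup>2\<close>.\<close>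
lemma ellipsoid_nonneg_imp_norm_le:
  fixes a v :: "nat \<Rightarrow> real"
  assumes a: "\<And>i. i < m \<Longrightarrow> 0 < a i"
    and nonneg: "\<And>t. (\<Sum>i<m. (t i / a i)^2) \<le> 1 \<Longrightarrow> 0 \<le> c + (\<Sum>i<m. t i * v i)"
  shows "sqrt (\<Sum>i<m. (a i * v i)^2) \<le> c"
proof -
  define V where "V = (\<Sum>i<m. (a i * v i)^2)"
  show ?thesis
  proof (cases "V = 0")
    case True
    then show ?thesis
      using nonneg[of "\<lambda>_. 0"] by (simp add: V_def)
  next
    case False
    then have V: "0 < V"
      by (simp add: V_def order_le_neq_trans sum_nonneg)
    define t where "t i = - (a i ^ 2 * v i) / sqrt V" for i
    have "(\<Sum>i<m. (t i / a i)^2) = (\<Sum>i<m. (a i * v i)^2 / V)"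
      using a V by (intro sum.cong) (simp_all add: t_def power2_eq_square field_simps)
    also have "\<dots> = 1"
      using V by (simp add: V_def flip: sum_divide_distrib)
    finally have "0 \<le> c + (\<Sum>i<m. t i * v i)"
      by (intro nonneg) simp
    moreover have "(\<Sum>i<m. t i * v i) = - V / sqrt V"
      by (simp add: t_def V_def sum_divide_distrib power2_eq_square algebra_simps flip: sum_negf)
    moreover have "V / sqrt V = sqrt V"
      using V by (simp add: real_div_sqrt)
    ultimately show ?thesis
      by (simp add: V_def)
  qed
qed

lemma prod_le_1_of_sum_le:
  fixes b :: "nat \<Rightarrow> real"
  assumes pos: "\<And>i. i < m \<Longrightarrow> 0 < b i" and sum: "(\<Sum>i<m. b i) \<le> real m"
  shows "(\<Prod>i<m. b i) \<le> 1" "(\<Prod>i<m. b i) = 1 \<Longrightarrow> \<forall>i<m. b i = 1"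
proof -
  have gap: "0 \<le> b i - 1 - ln (b i)" if "i < m" for i
    using pos[OF that] ln_le_minus_one[of "b i"] by simp
  have ln_prod: "ln (\<Prod>i<m. b i) = (\<Sum>i<m. ln (b i))"
    using pos by (intro ln_prod) (auto dest: less_imp_neq[symmetric])
  have "(\<Sum>i<m. b i - 1 - ln (b i)) = (\<Sum>i<m. b i) - real m - ln (\<Prod>i<m. b i)"
    by (simp add: ln_prod sum_subtractf)
  then have "ln (\<Prod>i<m. b i) \<le> 0"
    using sum sum_nonneg[of "{..<m}" "\<lambda>i. b i - 1 - ln (b i)"] gap by simp
  moreover have "0 < (\<Prod>i<m. b i)"
    using pos by (intro prod_pos) simp
  ultimately show "(\<Prod>i<m. b i) \<le> 1"
    by simp
  assume "(\<Prod>i<m. b i) = 1"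
  then have "(\<Sum>i<m. b i - 1 - ln (b i)) \<le> 0"
    using sum by (simp add: ln_prod[symmetric] sum_subtractf)
  moreover have "0 \<le> (\<Sum>i<m. b i - 1 - ln (b i))"
    using gap by (intro sum_nonneg) simp
  ultimately have "(\<Sum>i<m. b i - 1 - ln (b i)) = 0"
    by linarith
  then have "\<forall>i\<in>{..<m}. b i - 1 - ln (b i) = 0"
    using sum_nonneg_eq_0_iff[of "{..<m}" "\<lambda>i. b i - 1 - ln (b i)"] gap by simp
  then show "\<forall>i<m. b i = 1"
    using pos ln_eq_minus_one by force
qed

lemma sint_weighted_squares:
  assumes "orthonormal d m g"
  shows "sint (\<lambda>x. \<Sum>i<m. a i * (g i x)^2) = (\<Sum>i<m. a i)"
proof -
  have "sint (\<lambda>x. \<Sum>i<m. a i * (g i x * g i x)) = (\<Sum>i<m. a i * ip (g i) (g i))"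
    unfolding ip_def
    by (rule sint_lincomb[where d="d + d"]) (use assms in \<open>auto simp: orthonormal_def intro: forms_mult\<close>)
  then show ?thesis
    using assms by (simp add: power2_eq_square orthonormal_def)
qed

lemma onb_M0_weighted_squares_continuous:
  assumes "onb_M0 k m g"
  shows "continuous_on UNIV (\<lambda>x. \<Sum>i<m. a i * (g i x)^2)"
proof -
  have "continuous_on UNIV (g i)" if "i < m" for i
    using assms that forms_continuous[of "g i" "2*k"] by (simp add: onb_M0_def)
  then show ?thesis
    by (intro continuous_intros) auto
qed

lemma ellipsoid_subset_Cbar_sphere:
  fixes g :: "nat \<Rightarrow> real^'n::finite \<Rightarrow> real"
  assumes g: "onb_M0 k m g" and a: "\<And>i. i < m \<Longrightarrow> 0 < a i"
    and E: "ellipsoid c g a m \<subseteq> Cbar k" and x: "norm x = 1"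
  shows "(\<Sum>i<m. a i * (g i x)^2) \<le> sqrt (real m) * c x"
proof -
  have "0 \<le> c x + (\<Sum>i<m. t i * g i x)" if "(\<Sum>i<m. (t i / a i)^2) \<le> 1" for t
  proof -
    have "(\<lambda>x. c x + (\<Sum>i<m. t i * g i x)) \<in> Cbar k"
      using E that by (auto simp: ellipsoid_def)
    then show ?thesis
      by (simp add: Cbar_def Ccone_def)
  qed
  with a have bound: "sqrt (\<Sum>i<m. (a i * g i x)^2) \<le> c x"
    by (rule ellipsoid_nonneg_imp_norm_le)
  have "(\<Sum>i<m. a i * (g i x)^2) = (\<Sum>i<m. (a i * g i x) * g i x)"
    by (simp add: power2_eq_square mult.assoc)
  also have "\<dots> \<le> sqrt (\<Sum>i<m. (a i * g i x)^2) * sqrt (\<Sum>i<m. (g i x)^2)"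
    using abs_sum_mult_le_sqrt[of "\<lambda>i. a i * g i x" "\<lambda>i. g i x" "{..<m}"] by linarith
  also have "\<dots> \<le> c x * sqrt (real m)"
    using bound by (simp add: onb_M0_sum_squares_sphere[OF g x] mult_right_mono)
  finally show ?thesis
    by (simp add: mult.commute)
qed

lemma ellipsoid_subset_Cbar_sum_le:
  fixes g :: "nat \<Rightarrow> real^'n::finite \<Rightarrow> real"
  assumes g: "onb_M0 k m g" and c: "c \<in> Mset k" and a: "\<And>i. i < m \<Longrightarrow> 0 < a i"
    and E: "ellipsoid c g a m \<subseteq> Cbar k"
  shows "(\<Sum>i<m. a i) \<le> sqrt (real m)"
proof -
  have c_forms: "c \<in> forms (2*k)" "sint c = 1"
    using c by (simp_all add: Mset_def)
  have "sint (\<lambda>x. \<Sum>i<m. a i * (g i x)^2) \<le> sint (\<lambda>x. sqrt (real m) * c x)"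
    using ellipsoid_subset_Cbar_sphere[OF g a E] onb_M0_weighted_squares_continuous[OF g]
      forms_continuous[OF c_forms(1)]
    by (intro sint_mono_sphere continuous_on_mult_left) auto
  then show ?thesis
    using c_forms by (simp add: sint_weighted_squares[OF onb_M0_orthonormal[OF g]] sint_cmult)
qed

text \<open>AM--GM applied to \<open>b\<^sub>i = \<surd>m a\<^sub>i\<close>.\<close>
lemma ellipsoid_subset_Cbar_volume:
  fixes g :: "nat \<Rightarrow> real^'n::finite \<Rightarrow> real"
  assumes g: "onb_M0 k m g" and m: "0 < m" and c: "c \<in> Mset k"
    and a: "\<And>i. i < m \<Longrightarrow> 0 < a i" and E: "ellipsoid c g a m \<subseteq> Cbar k"
  shows "(\<Prod>i<m. a i) \<le> (1 / sqrt (real m)) ^ m"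
    and "(\<Prod>i<m. a i) = (1 / sqrt (real m)) ^ m \<Longrightarrow> \<forall>i<m. a i = 1 / sqrt (real m)"
proof -
  define b where "b i = sqrt (real m) * a i" for i
  have b: "\<And>i. i < m \<Longrightarrow> 0 < b i"
    using a m by (simp add: b_def)
  have "(\<Sum>i<m. b i) = sqrt (real m) * (\<Sum>i<m. a i)"
    by (simp add: b_def sum_distrib_left)
  also have "\<dots> \<le> sqrt (real m) * sqrt (real m)"
    using ellipsoid_subset_Cbar_sum_le[OF g c a E] by (rule mult_left_mono) simp_all
  finally have b_sum: "(\<Sum>i<m. b i) \<le> real m"
    by simp
  have prod_a: "(\<Prod>i<m. a i) = (1 / sqrt (real m)) ^ m * (\<Prod>i<m. b i)"
    using m by (simp add: b_def prod.distrib power_one_over)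
  have pos: "0 < (1 / sqrt (real m)) ^ m"
    using m by simp
  show "(\<Prod>i<m. a i) \<le> (1 / sqrt (real m)) ^ m"
    using prod_le_1_of_sum_le(1)[OF b b_sum] pos by (simp add: prod_a)
  assume "(\<Prod>i<m. a i) = (1 / sqrt (real m)) ^ m"
  then have "(\<Prod>i<m. b i) = 1"
    using pos m by (simp add: prod_a)
  then show "\<forall>i<m. a i = 1 / sqrt (real m)"
    using prod_le_1_of_sum_le(2)[OF b b_sum] m by (simp add: b_def field_simps)
qed

text \<open>When all \<open>a\<^sub>i = 1/\<surd>m\<close>, both sides of the pointwise bound on the sphere integrate to
  \<open>\<surd>m\<close>, so the bound is an equality there, which forces \<open>c = 1\<close> on the sphere.\<close>
lemma ellipsoid_subset_Cbar_center:
  fixes g :: "nat \<Rightarrow> real^'n::finite \<Rightarrow> real"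
  assumes g: "onb_M0 k m g" and m: "0 < m" and c: "c \<in> Mset k"
    and a: "\<And>i. i < m \<Longrightarrow> a i = 1 / sqrt (real m)" and E: "ellipsoid c g a m \<subseteq> Cbar k"
  shows "c = r2k k"
proof -
  have c_forms: "c \<in> forms (2*k)" "sint c = 1"
    using c by (simp_all add: Mset_def)
  have a_pos: "\<And>i. i < m \<Longrightarrow> 0 < a i"
    using a m by simp
  define h where "h x = sqrt (real m) * c x - (\<Sum>i<m. a i * (g i x)^2)" for x
  have cont: "continuous_on UNIV (\<lambda>x. sqrt (real m) * c x)"
    "continuous_on UNIV (\<lambda>x. \<Sum>i<m. a i * (g i x)^2)"
    using forms_continuous[OF c_forms(1)] onb_M0_weighted_squares_continuous[OF g]
    by (auto intro: continuous_on_mult_left)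
  then have h_cont: "continuous_on UNIV h"
    unfolding h_def by (intro continuous_on_diff)
  have "(\<Sum>i<m. a i) = sqrt (real m)"
    using a m by (simp add: real_div_sqrt)
  then have "sint h = 0"
    unfolding h_def using c_forms
    by (simp add: sint_diff[OF cont] sint_cmult sint_weighted_squares[OF onb_M0_orthonormal[OF g]])
  have "c x = r2k k x" if x: "norm x = 1" for x
  proof -
    have "h x = 0"
      using ellipsoid_subset_Cbar_sphere[OF g a_pos E] \<open>sint h = 0\<close> x
      by (intro sint_nonneg_eq_0_sphere[OF h_cont]) (simp_all add: h_def)
    then have "sqrt (real m) * c x = 1 / sqrt (real m) * (\<Sum>i<m. (g i x)^2)"
      by (simp add: h_def a sum_distrib_left)
    then show ?thesis
      using m by (simp add: onb_M0_sum_squares_sphere[OF g x] r2k_sphere[OF x] real_div_sqrt)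
  qed
  then show ?thesis
    by (rule forms_eq_sphere[OF c_forms(1) r2k_forms])
qed

lemma ellipsoid_cong: "(\<And>i. i < m \<Longrightarrow> a i = a' i) \<Longrightarrow> ellipsoid c g a m = ellipsoid c g a' m"
  by (simp add: ellipsoid_def)

lemma ellipsoid_subset_Cbar_max_volume:
  fixes g :: "nat \<Rightarrow> real^'n::finite \<Rightarrow> real"
  assumes n: "CARD('n) \<ge> 2" and k: "k \<ge> 1" and c: "c \<in> Mset k" and g: "onb_M0 k m g"
    and a: "\<forall>i<m. 0 < a i" and E: "ellipsoid c g a m \<subseteq> Cbar k"
  shows "(\<Prod>i<m. a i) \<le> rho CARD('n) k ^ m"
    and "(\<Prod>i<m. a i) = rho CARD('n) k ^ m \<Longrightarrow>
      ellipsoid c g a m = {f \<in> Mset k. fnorm (\<lambda>x. f x - r2k k x) \<le> rho CARD('n) k}"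
proof -
  note m = rho_eq_onb_M0[OF n k g]
  note volume = ellipsoid_subset_Cbar_volume[OF g m(1) c _ E]
  have "(\<Prod>i<m. a i) \<le> (1 / sqrt (real m)) ^ m"
    using volume(1) a by blast
  then show "(\<Prod>i<m. a i) \<le> rho CARD('n) k ^ m"
    using m(2) by simp
  assume "(\<Prod>i<m. a i) = rho CARD('n) k ^ m"
  then have "(\<Prod>i<m. a i) = (1 / sqrt (real m)) ^ m"
    using m(2) by simp
  then have a_eq: "\<And>i. i < m \<Longrightarrow> a i = 1 / sqrt (real m)"
    using volume(2) a by blast
  then have "c = r2k k"
    by (rule ellipsoid_subset_Cbar_center[OF g m(1) c _ E])
  then have "ellipsoid c g a m = ellipsoid (r2k k) g (\<lambda>_. 1 / sqrt (real m)) m"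
    using ellipsoid_cong[of m a "\<lambda>_. 1 / sqrt (real m)" c g] a_eq by simp
  also have "\<dots> = {f \<in> Mset k. fnorm (\<lambda>x. f x - r2k k x) \<le> rho CARD('n) k}"
    using m by (simp add: ellipsoid_r2k_eq_ball[OF g])
  finally show "ellipsoid c g a m = {f \<in> Mset k. fnorm (\<lambda>x. f x - r2k k x) \<le> rho CARD('n) k}" .
qed

theorem theorem5p3:
  fixes k :: nat
  assumes "CARD('n::finite) \<ge> 2" and "k \<ge> 1"
  defines "B \<equiv> {f \<in> (Mset k :: (real^'n \<Rightarrow> real) set).
                 fnorm (\<lambda>x. f x - r2k k x) \<le> rho CARD('n) k}"
  shows "r2k k \<in> (Mset k :: (real^'n \<Rightarrow> real) set) \<and> B \<subseteq> Cbar k \<and>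
    (\<forall>(c :: real^'n \<Rightarrow> real) g a m.
       c \<in> Mset k \<and> onb_M0 k m g \<and> (\<forall>i<m. a i > 0) \<and> ellipsoid c g a m \<subseteq> Cbar k \<longrightarrow>
         (\<Prod>i<m. a i) \<le> rho CARD('n) k ^ m \<and>
         ((\<Prod>i<m. a i) = rho CARD('n) k ^ m \<longrightarrow> ellipsoid c g a m = B))"
proof -
  obtain m0 and g0 :: "nat \<Rightarrow> real^'n \<Rightarrow> real" where g0: "onb_M0 k m0 g0"
    using onb_M0_exists by blast
  then have "B \<subseteq> Cbar k"
    using ball_subset_Cbar[OF g0] rho_eq_onb_M0[OF assms(1,2) g0] by (simp add: B_def)
  moreover have "(\<Prod>i<m. a i) \<le> rho CARD('n) k ^ m \<and>
      ((\<Prod>i<m. a i) = rho CARD('n) k ^ m \<longrightarrow> ellipsoid c g a m = B)"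
    if "c \<in> Mset k \<and> onb_M0 k m g \<and> (\<forall>i<m. a i > 0) \<and> ellipsoid c g a m \<subseteq> Cbar k"
    for c :: "real^'n \<Rightarrow> real" and g a m
    using that ellipsoid_subset_Cbar_max_volume[OF assms(1,2), of c m g a] unfolding B_def by blast
  ultimately show ?thesis
    using r2k_in_Mset by blast
qed

end
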